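(* Let $N\ge 2$, $l\ge 1$, $\sigma\in\mathfrak S_{N,l}$, and let $\mathsf M_\sigma=(Q,\Sigma,\Delta,\delta,\lambda)$ be the semi-Mealy machine by $\sigma$. Let $k\ge 1$ and let $J=(j_1,\dots,j_k)\in\{1,\dots,N\}^k$ be nonperiodic. Decompose the set $Q_J$ of periodic states into its orbits, $Q_J=[p_1]\sqcup\cdots\sqcup[p_M]$ with $p_1,\dots,p_M\in Q_J$, and put $r_i=\#[p_i]$. For $i=1,\dots,M$ define the word $J_i$ over $\{1,\dots,N\}$ by $b_{J_i}=\lambda(p_i,(a_J)^{r_i})$. Then $$P(J)\circ\psi_\sigma \cong P(J_1)\oplus\cdots\oplus P(J_M),$$ where $\cong$ denotes unitary equivalence of representations of $\mathcal O_N$.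
   Context: $\mathcal O_N$ ($N\ge2$) is the Cuntz algebra, the C$^*$-algebra universally generated by $s_1,\dots,s_N$ with $s_i^*s_j=\delta_{ij}I$ and $\sum_{i=1}^N s_is_i^*=I$. For $J=(j_1,\dots,j_k)$ write $s_J=s_{j_1}\cdots s_{j_k}$. Convention: $\{1,\dots,N\}^0=\{0\}$. $P(J)$: for $J=(j_1,\dots,j_k)\in\{1,\dots,N\}^k$, a representation $(\mathcal H,\pi)$ of $\mathcal O_N$ is $P(J)$ if there is a unit cyclic vector $\Omega$ with $\pi(s_J)\Omega=\Omega$ and $\{\pi(s_{j_i}\cdots s_{j_k})\Omega\}_{i=1}^k$ orthonormal; such a representation exists and is unique up to unitary equivalence, and $P(J)$ denotes it. For a representation $\pi$ and endomorphism $\rho$, $\pi\circ\rho$ is the composed representation. $J$ is nonperiodic if it cannot be written as the $r$-fold concatenation $J_0\cdots J_0$ of some word $J_0$ with $r\ge 2$. $\mathfrak S_{N,l}$ is the set of permutations of $\{1,\dots,N\}^l$. For $\sigma\in\mathfrak S_{N,l}$, $\psi_\sigma$ is the unital $*$-endomorphism of $\mathcal O_N$ with $\psi_\sigma(s_i)=u_\sigma s_i$, where $u_\sigma=\sum_{K\in\{1,\dots,N\}^l}s_{\sigma(K)}s_K^*$. For $x\in\{1,\dots,N\}^l$ write $\sigma^{-1}(x)=(y_1,\dots,y_l)$ and set $(\sigma^{-1})_1(x)=y_1$, $(\sigma^{-1})_{2,l}(x)=(y_2,\dots,y_l)$. Semi-Mealy machine by $\sigma$: $\mathsf M_\sigma=(Q,\Sigma,\Delta,\delta,\lambda)$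 with $Q=\{q_K:K\in\{1,\dots,N\}^{l-1}\}$, $\Sigma=\{a_1,\dots,a_N\}$, $\Delta=\{b_1,\dots,b_N\}$; for $i\in\{1,\dots,N\}$ and $K\in\{1,\dots,N\}^{l-1}$: if $l=1$, $\delta(q_0,a_i)=q_0$ and $\lambda(q_0,a_i)=b_{\sigma^{-1}(i)}$; if $l\ge2$, $\delta(q_K,a_i)=q_{(\sigma^{-1})_{2,l}(K,i)}$ and $\lambda(q_K,a_i)=b_{(\sigma^{-1})_1(K,i)}$. These are extended to words ($\Sigma^*$, $\Delta^*$ the free semigroups) by $\delta(q,wa)=\delta(\delta(q,w),a)$ and $\lambda(q,wa)=\lambda(q,w)\lambda(\delta(q,w),a)$. For $J=(j_1,\dots,j_k)$ let $a_J=a_{j_1}\cdots a_{j_k}$ and $b_J=b_{j_1}\cdots b_{j_k}$. $Q_J=\{q\in Q:\delta(q,(a_J)^n)=q\text{ for some }n\ge1\}$; on $Q_J$, $q\sim q'$ iff $\delta(q,(a_J)^n)=q'$ for some $n\ge1$, and $[q]$ is the equivalence class (orbit) of $q$. *)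

theory Defs
  imports "HOL-Analysis.Analysis" "HOL-Combinatorics.Permutations"
begin

text \<open>Words in {1,...,N}^k are lists of naturals of length k with entries in {1..N}.
  The convention {1,...,N}^0 = {0} is realised by the empty list.\<close>

definition words :: "nat \<Rightarrow> nat \<Rightarrow> nat list set" where
  "words N k = {w. length w = k \<and> set w \<subseteq> {1..N}}"

definition nonperiodic :: "nat list \<Rightarrow> bool" where
  "nonperiodic J \<longleftrightarrow> \<not> (\<exists>J0 r. r \<ge> 2 \<and> J = concat (replicate r J0))"

definition wpow :: "nat list \<Rightarrow> nat \<Rightarrow> nat list" where
  "wpow J n = concat (replicate n J)"

text \<open>States q_K are identified with words K of length l-1, input letters a_i and
  output letters b_i with i.  sigma is a permutation of words N l (extended by the
  identity outside), so its inverse is inv sigma.\<close>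

definition mealy_delta :: "(nat list \<Rightarrow> nat list) \<Rightarrow> nat list \<Rightarrow> nat \<Rightarrow> nat list" where
  "mealy_delta \<sigma> K i = tl (inv \<sigma> (K @ [i]))"

definition mealy_lambda :: "(nat list \<Rightarrow> nat list) \<Rightarrow> nat list \<Rightarrow> nat \<Rightarrow> nat" where
  "mealy_lambda \<sigma> K i = hd (inv \<sigma> (K @ [i]))"

fun delta_w :: "(nat list \<Rightarrow> nat list) \<Rightarrow> nat list \<Rightarrow> nat list \<Rightarrow> nat list" where
  "delta_w \<sigma> q [] = q"
| "delta_w \<sigma> q (a # w) = delta_w \<sigma> (mealy_delta \<sigma> q a) w"

fun lambda_w :: "(nat list \<Rightarrow> nat list) \<Rightarrow> nat list \<Rightarrow> nat list \<Rightarrow> nat list" where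
  "lambda_w \<sigma> q [] = []"
| "lambda_w \<sigma> q (a # w) = mealy_lambda \<sigma> q a # lambda_w \<sigma> (mealy_delta \<sigma> q a) w"

definition periodic_states :: "nat \<Rightarrow> nat \<Rightarrow> (nat list \<Rightarrow> nat list) \<Rightarrow> nat list \<Rightarrow> nat list set" where
  "periodic_states N l \<sigma> J =
     {q \<in> words N (l - 1). \<exists>n\<ge>1. delta_w \<sigma> q (wpow J n) = q}"

definition orbit_state :: "(nat list \<Rightarrow> nat list) \<Rightarrow> nat list \<Rightarrow> nat list \<Rightarrow> nat list set" where
  "orbit_state \<sigma> J q = {q'. \<exists>n\<ge>1. delta_w \<sigma> q (wpow J n) = q'}"

text \<open>Every complex Hilbert space is unitarily isomorphic to some l^2(X); we work
  with l^2 over an arbitrary type 'a.  Inner product is linear in the second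
  argument.\<close>

definition l2 :: "('a \<Rightarrow> complex) set" where
  "l2 = {f. (\<lambda>x. (cmod (f x))^2) summable_on UNIV}"

definition ip :: "('a \<Rightarrow> complex) \<Rightarrow> ('a \<Rightarrow> complex) \<Rightarrow> complex" where
  "ip f g = infsum (\<lambda>x. cnj (f x) * g x) UNIV"

definition l2norm :: "('a \<Rightarrow> complex) \<Rightarrow> real" where
  "l2norm f = sqrt (infsum (\<lambda>x. (cmod (f x))^2) UNIV)"

definition bounded_op :: "(('a \<Rightarrow> complex) \<Rightarrow> ('a \<Rightarrow> complex)) \<Rightarrow> bool" where
  "bounded_op A \<longleftrightarrow>
     (\<forall>f\<in>l2. A f \<in> l2) \<and>
     (\<forall>f\<in>l2. \<forall>g\<in>l2. A (\<lambda>x. f x + g x) = (\<lambda>x. A f x + A g x)) \<and>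
     (\<forall>f\<in>l2. \<forall>c. A (\<lambda>x. c * f x) = (\<lambda>x. c * A f x)) \<and>
     (\<exists>C. \<forall>f\<in>l2. l2norm (A f) \<le> C * l2norm f)"

text \<open>A representation of O_N on l^2('a) is given by the images S i of the
  generators s_i together with their adjoints Sa i = S i^*.\<close>

definition cuntz_rep ::
  "nat \<Rightarrow> (nat \<Rightarrow> ('a \<Rightarrow> complex) \<Rightarrow> ('a \<Rightarrow> complex)) \<Rightarrow>
          (nat \<Rightarrow> ('a \<Rightarrow> complex) \<Rightarrow> ('a \<Rightarrow> complex)) \<Rightarrow> bool" where
  "cuntz_rep N S Sa \<longleftrightarrow>
     (\<forall>i\<in>{1..N}. bounded_op (S i) \<and> bounded_op (Sa i) \<and>
        (\<forall>f\<in>l2. \<forall>g\<in>l2. ip (S i f) g = ip f (Sa i g))) \<and>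
     (\<forall>i\<in>{1..N}. \<forall>j\<in>{1..N}. \<forall>f\<in>l2. Sa i (S j f) = (if i = j then f else (\<lambda>x. 0))) \<and>
     (\<forall>f\<in>l2. f = (\<lambda>x. \<Sum>i=1..N. S i (Sa i f) x))"

text \<open>opw S K = pi(s_K), opa Sa K = pi(s_K^*).\<close>

fun opw :: "(nat \<Rightarrow> ('a \<Rightarrow> complex) \<Rightarrow> ('a \<Rightarrow> complex)) \<Rightarrow> nat list \<Rightarrow> ('a \<Rightarrow> complex) \<Rightarrow> ('a \<Rightarrow> complex)" where
  "opw S [] = id"
| "opw S (j # w) = S j \<circ> opw S w"

fun opa :: "(nat \<Rightarrow> ('a \<Rightarrow> complex) \<Rightarrow> ('a \<Rightarrow> complex)) \<Rightarrow> nat list \<Rightarrow> ('a \<Rightarrow> complex) \<Rightarrow> ('a \<Rightarrow> complex)" where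
  "opa Sa [] = id"
| "opa Sa (j # w) = opa Sa w \<circ> Sa j"

text \<open>Monomials in the generators and their adjoints: a letter (True, i) stands for
  s_i and (False, i) for s_i^*.\<close>

fun mono_op :: "(nat \<Rightarrow> ('a \<Rightarrow> complex) \<Rightarrow> ('a \<Rightarrow> complex)) \<Rightarrow> (nat \<Rightarrow> ('a \<Rightarrow> complex) \<Rightarrow> ('a \<Rightarrow> complex)) \<Rightarrow>
     (bool \<times> nat) list \<Rightarrow> ('a \<Rightarrow> complex) \<Rightarrow> ('a \<Rightarrow> complex)" where
  "mono_op S Sa [] = id"
| "mono_op S Sa ((b, i) # w) = (if b then S i else Sa i) \<circ> mono_op S Sa w"

definition c_span :: "('a \<Rightarrow> complex) set \<Rightarrow> ('a \<Rightarrow> complex) set" where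
  "c_span A = {g. \<exists>(n::nat) c v. (\<forall>i<n. v i \<in> A) \<and> g = (\<lambda>x. \<Sum>i<n. c i * v i x)}"

definition cl_span :: "('a \<Rightarrow> complex) set \<Rightarrow> ('a \<Rightarrow> complex) set" where
  "cl_span A = {f \<in> l2. \<forall>\<epsilon>>0. \<exists>g\<in>c_span A. l2norm (\<lambda>x. f x - g x) < \<epsilon>}"

text \<open>The cyclic subspace closure(pi(O_N) Omega): O_N is the closed span of the
  monomials in the s_i and s_i^*.\<close>
definition cyclic_space ::
  "nat \<Rightarrow> (nat \<Rightarrow> ('a \<Rightarrow> complex) \<Rightarrow> ('a \<Rightarrow> complex)) \<Rightarrow> (nat \<Rightarrow> ('a \<Rightarrow> complex) \<Rightarrow> ('a \<Rightarrow> complex)) \<Rightarrow>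
     ('a \<Rightarrow> complex) \<Rightarrow> ('a \<Rightarrow> complex) set" where
  "cyclic_space N S Sa \<Omega> = cl_span {mono_op S Sa w \<Omega> | w. set (map snd w) \<subseteq> {1..N}}"

definition PJ_vector ::
  "(nat \<Rightarrow> ('a \<Rightarrow> complex) \<Rightarrow> ('a \<Rightarrow> complex)) \<Rightarrow> nat list \<Rightarrow> ('a \<Rightarrow> complex) \<Rightarrow> bool" where
  "PJ_vector S J \<Omega> \<longleftrightarrow> \<Omega> \<in> l2 \<and> l2norm \<Omega> = 1 \<and> opw S J \<Omega> = \<Omega> \<and>
     (\<forall>i<length J. \<forall>i'<length J.
        ip (opw S (drop i J) \<Omega>) (opw S (drop i' J) \<Omega>) = (if i = i' then 1 else 0))"

text \<open>The representation (S, Sa) is (unitarily equivalent to) P(J).\<close>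
definition is_P ::
  "nat \<Rightarrow> (nat \<Rightarrow> ('a \<Rightarrow> complex) \<Rightarrow> ('a \<Rightarrow> complex)) \<Rightarrow> (nat \<Rightarrow> ('a \<Rightarrow> complex) \<Rightarrow> ('a \<Rightarrow> complex)) \<Rightarrow>
     nat list \<Rightarrow> bool" where
  "is_P N S Sa J \<longleftrightarrow> cuntz_rep N S Sa \<and>
     (\<exists>\<Omega>. PJ_vector S J \<Omega> \<and> cyclic_space N S Sa \<Omega> = l2)"

text \<open>The representation (S, Sa) is unitarily equivalent to P(J_0) + ... + P(J_{M-1}):
  l^2 is the orthogonal direct sum of M cyclic (hence invariant) subspaces,
  the i-th of which carries the subrepresentation P(J_i).\<close>
definition is_sum_P ::
  "nat \<Rightarrow> (nat \<Rightarrow> ('a \<Rightarrow> complex) \<Rightarrow> ('a \<Rightarrow> complex)) \<Rightarrow> (nat \<Rightarrow> ('a \<Rightarrow> complex) \<Rightarrow> ('a \<Rightarrow> complex)) \<Rightarrow>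
     nat \<Rightarrow> (nat \<Rightarrow> nat list) \<Rightarrow> bool" where
  "is_sum_P N S Sa M Js \<longleftrightarrow> cuntz_rep N S Sa \<and>
     (\<exists>\<Omega>s. (\<forall>i<M. PJ_vector S (Js i) (\<Omega>s i)) \<and>
        (\<forall>i<M. \<forall>i'<M. i \<noteq> i' \<longrightarrow>
            (\<forall>f\<in>cyclic_space N S Sa (\<Omega>s i). \<forall>g\<in>cyclic_space N S Sa (\<Omega>s i'). ip f g = 0)) \<and>
        cl_span (\<Union>i<M. cyclic_space N S Sa (\<Omega>s i)) = l2)"

text \<open>pi(u_sigma) = sum_K pi(s_{sigma K}) pi(s_K^*), and its adjoint.\<close>
definition u_op :: "nat \<Rightarrow> nat \<Rightarrow> (nat list \<Rightarrow> nat list) \<Rightarrow>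
    (nat \<Rightarrow> ('a \<Rightarrow> complex) \<Rightarrow> ('a \<Rightarrow> complex)) \<Rightarrow> (nat \<Rightarrow> ('a \<Rightarrow> complex) \<Rightarrow> ('a \<Rightarrow> complex)) \<Rightarrow>
    ('a \<Rightarrow> complex) \<Rightarrow> ('a \<Rightarrow> complex)" where
  "u_op N l \<sigma> S Sa f = (\<lambda>x. \<Sum>K\<in>words N l. opw S (\<sigma> K) (opa Sa K f) x)"

definition u_adj_op :: "nat \<Rightarrow> nat \<Rightarrow> (nat list \<Rightarrow> nat list) \<Rightarrow>
    (nat \<Rightarrow> ('a \<Rightarrow> complex) \<Rightarrow> ('a \<Rightarrow> complex)) \<Rightarrow> (nat \<Rightarrow> ('a \<Rightarrow> complex) \<Rightarrow> ('a \<Rightarrow> complex)) \<Rightarrow>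
    ('a \<Rightarrow> complex) \<Rightarrow> ('a \<Rightarrow> complex)" where
  "u_adj_op N l \<sigma> S Sa f = (\<lambda>x. \<Sum>K\<in>words N l. opw S K (opa Sa (\<sigma> K) f) x)"

text \<open>The composed representation pi o psi_sigma: generators
  pi(psi(s_i)) = pi(u) pi(s_i), adjoints pi(psi(s_i)^*) = pi(s_i^*) pi(u)^*.\<close>
definition comp_psi_S where
  "comp_psi_S N l \<sigma> S Sa = (\<lambda>i. u_op N l \<sigma> S Sa \<circ> S i)"

definition comp_psi_Sa where
  "comp_psi_Sa N l \<sigma> S Sa = (\<lambda>i. Sa i \<circ> u_adj_op N l \<sigma> S Sa)"

end

(* Write U = pi(u_sigma), so that pi o psi_sigma has generators T_i = U S_i, and U S_K = S_sigma(K)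
   for |K| = l.  Unwinding the definition of the machine gives T_lambda(q,w) S_delta(q,w) = S_q S_w
   for every state q and input word w.  Since S_J Omega = Omega, every vector S_K Omega can be
   rewritten so that the state delta(q,w) is periodic, and the orbit of that state is preserved
   by all T_i and T_i^* (up to killing the vector).  Vectors with different orbits are orthogonal,
   because <S_K Omega, S_K' Omega> /= 0 forces K' = K J^t.  For a periodic state p with orbit of
   size r, S_p Omega is fixed by T_lambda(p,J^r) and its shifts are orthonormal, so it generates a
   copy of P(J_i); finally every S_K Omega is reached from some S_p_i Omega by the T's and T^*'s,
   which gives completeness. *)

theory Submission
  imports Defs
begin

declare One_nat_def [simp del]

section \<open>Square-summable functions\<close>

lemma l2_sq_summable: "f \<in> l2 \<Longrightarrow> (\<lambda>x. (cmod (f x))^2) summable_on UNIV"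
  by (simp add: l2_def)

lemma ip_abs_summable:
  assumes "f \<in> l2" "g \<in> l2"
  shows "(\<lambda>x. norm (cnj (f x) * g x)) summable_on UNIV"
proof (rule summable_on_comparison_test)
  show "(\<lambda>x. (cmod (f x))^2 + (cmod (g x))^2) summable_on UNIV"
    using assms by (intro summable_on_add l2_sq_summable)
  show "norm (cnj (f x) * g x) \<le> (cmod (f x))^2 + (cmod (g x))^2" for x
    using sum_squares_bound[of "cmod (f x)" "cmod (g x)"]
      mult_nonneg_nonneg[OF norm_ge_zero norm_ge_zero, of "f x" "g x"]
    unfolding norm_mult complex_mod_cnj by linarith
qed auto

lemma ip_summable: "f \<in> l2 \<Longrightarrow> g \<in> l2 \<Longrightarrow> (\<lambda>x. cnj (f x) * g x) summable_on UNIV"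
  by (rule abs_summable_summable[OF ip_abs_summable])

lemma l2_zero: "(\<lambda>x. 0) \<in> l2"
  by (simp add: l2_def)

lemma l2_add:
  assumes "f \<in> l2" "g \<in> l2"
  shows "(\<lambda>x. f x + g x) \<in> l2"
  unfolding l2_def mem_Collect_eq
proof (rule summable_on_comparison_test)
  show "(\<lambda>x. 2 * (cmod (f x))^2 + 2 * (cmod (g x))^2) summable_on UNIV"
    using assms by (intro summable_on_add summable_on_cmult_right l2_sq_summable)
  show "(cmod (f x + g x))^2 \<le> 2 * (cmod (f x))^2 + 2 * (cmod (g x))^2" for x
  proof -
    have "(cmod (f x + g x))^2 \<le> (cmod (f x) + cmod (g x))^2"
      by (simp add: power_mono norm_triangle_ineq)
    then show ?thesis
      using sum_squares_bound[of "cmod (f x)" "cmod (g x)"] by (simp add: power2_sum)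
  qed
qed auto

lemma l2_scale: "f \<in> l2 \<Longrightarrow> (\<lambda>x. c * f x) \<in> l2"
  using summable_on_cmult_right[OF l2_sq_summable, of f "(cmod c)^2"]
  by (simp add: l2_def norm_mult power_mult_distrib)

lemma l2_diff: "f \<in> l2 \<Longrightarrow> g \<in> l2 \<Longrightarrow> (\<lambda>x. f x - g x) \<in> l2"
  using l2_add[OF _ l2_scale, of f g "-1"] by simp

lemma l2_sum: "(\<And>i. i \<in> A \<Longrightarrow> f i \<in> l2) \<Longrightarrow> (\<lambda>x. \<Sum>i\<in>A. f i x) \<in> l2"
  by (induction A rule: infinite_finite_induct) (auto simp: l2_zero l2_add)

lemma ip_swap: "ip f g = cnj (ip g f)"
  unfolding ip_def infsum_cnj[symmetric] by (simp add: mult.commute)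

lemma ip_zero_left [simp]: "ip (\<lambda>x. 0) g = 0"
  by (simp add: ip_def)

lemma ip_zero_right [simp]: "ip f (\<lambda>x. 0) = 0"
  by (simp add: ip_def)

lemma ip_add_left:
  "f \<in> l2 \<Longrightarrow> g \<in> l2 \<Longrightarrow> h \<in> l2 \<Longrightarrow> ip (\<lambda>x. f x + g x) h = ip f h + ip g h"
  unfolding ip_def by (simp add: distrib_right infsum_add ip_summable)

lemma ip_add_right:
  "f \<in> l2 \<Longrightarrow> g \<in> l2 \<Longrightarrow> h \<in> l2 \<Longrightarrow> ip f (\<lambda>x. g x + h x) = ip f g + ip f h"
  unfolding ip_def by (simp add: distrib_left infsum_add ip_summable)

lemma ip_scale_left: "f \<in> l2 \<Longrightarrow> g \<in> l2 \<Longrightarrow> ip (\<lambda>x. c * f x) g = cnj c * ip f g"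
  unfolding ip_def using infsum_cmult_right[of "cnj c", OF ip_summable]
  by (simp add: mult.assoc)

lemma ip_scale_right: "f \<in> l2 \<Longrightarrow> g \<in> l2 \<Longrightarrow> ip f (\<lambda>x. c * g x) = c * ip f g"
  using ip_scale_left[of g f c] ip_swap[of f g] ip_swap[of f "\<lambda>x. c * g x"] by simp

lemma ip_diff_left:
  "f \<in> l2 \<Longrightarrow> g \<in> l2 \<Longrightarrow> h \<in> l2 \<Longrightarrow> ip (\<lambda>x. f x - g x) h = ip f h - ip g h"
  using ip_add_left[OF _ l2_scale, of f g h "-1"] ip_scale_left[of g h "-1"] by simp

lemma ip_diff_right:
  "f \<in> l2 \<Longrightarrow> g \<in> l2 \<Longrightarrow> h \<in> l2 \<Longrightarrow> ip h (\<lambda>x. f x - g x) = ip h f - ip h g"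
  using ip_diff_left[of f g h] ip_swap[of h f] ip_swap[of h g] ip_swap[of h "\<lambda>x. f x - g x"]
  by simp

lemma ip_sum_left:
  "(\<And>i. i \<in> A \<Longrightarrow> f i \<in> l2) \<Longrightarrow> g \<in> l2 \<Longrightarrow> ip (\<lambda>x. \<Sum>i\<in>A. f i x) g = (\<Sum>i\<in>A. ip (f i) g)"
  by (induction A rule: infinite_finite_induct) (auto simp: ip_add_left l2_sum)

lemma ip_sum_right:
  "(\<And>i. i \<in> A \<Longrightarrow> f i \<in> l2) \<Longrightarrow> g \<in> l2 \<Longrightarrow> ip g (\<lambda>x. \<Sum>i\<in>A. f i x) = (\<Sum>i\<in>A. ip g (f i))"
  by (induction A rule: infinite_finite_induct) (auto simp: ip_add_right l2_sum)

lemma l2norm_zero [simp]: "l2norm (\<lambda>x. 0) = 0"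
  by (simp add: l2norm_def)

lemma l2norm_nonneg: "l2norm f \<ge> 0"
  unfolding l2norm_def by (simp add: infsum_nonneg)

lemma l2norm_sq: "(l2norm f)^2 = infsum (\<lambda>x. (cmod (f x))^2) UNIV"
  by (simp add: l2norm_def infsum_nonneg)

lemma ip_self:
  assumes "f \<in> l2"
  shows "ip f f = of_real ((l2norm f)^2)"
proof -
  have "(\<lambda>x. cnj (f x) * f x) = (\<lambda>x. of_real ((cmod (f x))^2))"
    by (simp add: complex_norm_square mult.commute del: of_real_power)
  moreover have "((\<lambda>x. of_real ((cmod (f x))^2) :: complex) has_sum of_real ((l2norm f)^2)) UNIV"
    unfolding l2norm_sq by (intro has_sum_of_real has_sum_infsum l2_sq_summable assms)
  ultimately show ?thesis
    unfolding ip_def by (simp add: infsumI)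
qed

lemma l2norm_eq_sqrt_ip: "f \<in> l2 \<Longrightarrow> l2norm f = sqrt (Re (ip f f))"
  by (simp add: ip_self l2norm_nonneg)

lemma cauchy_schwarz:
  assumes "f \<in> l2" "g \<in> l2"
  shows "cmod (ip f g) \<le> l2norm f * l2norm g"
proof -
  have partial_sum_le_l2norm: "sqrt (\<Sum>x\<in>F. (cmod (h x))^2) \<le> l2norm h"
    if "h \<in> l2" "finite F" for h :: "'a \<Rightarrow> complex" and F
    unfolding l2norm_def using that
    by (intro real_sqrt_le_mono finite_sum_le_infsum l2_sq_summable) auto
  have "cmod (ip f g) \<le> infsum (\<lambda>x. cmod (f x) * cmod (g x)) UNIV"
    unfolding ip_def using norm_infsum_bound[OF ip_abs_summable[OF assms]] by (simp add: norm_mult)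
  also have "\<dots> \<le> l2norm f * l2norm g"
  proof (rule infsum_le_finite_sums)
    show "(\<lambda>x. cmod (f x) * cmod (g x)) summable_on UNIV"
      using ip_abs_summable[OF assms] by (simp add: norm_mult)
    fix F :: "'a set" assume "finite F"
    have "(\<Sum>x\<in>F. cmod (f x) * cmod (g x)) \<le> L2_set (\<lambda>x. cmod (f x)) F * L2_set (\<lambda>x. cmod (g x)) F"
      using L2_set_mult_ineq[of "\<lambda>x. cmod (f x)" "\<lambda>x. cmod (g x)" F] by simp
    also have "\<dots> \<le> l2norm f * l2norm g"
      unfolding L2_set_def using partial_sum_le_l2norm assms \<open>finite F\<close>
      by (intro mult_mono) (auto simp: l2norm_nonneg sum_nonneg)
    finally show "(\<Sum>x\<in>F. cmod (f x) * cmod (g x)) \<le> l2norm f * l2norm g" .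
  qed
  finally show ?thesis .
qed

lemma c_span_l2: "X \<subseteq> l2 \<Longrightarrow> f \<in> c_span X \<Longrightarrow> f \<in> l2"
  unfolding c_span_def by (auto intro!: l2_sum l2_scale)

lemma c_span_mono: "X \<subseteq> Y \<Longrightarrow> c_span X \<subseteq> c_span Y"
  unfolding c_span_def by blast

lemma cl_span_mono: "X \<subseteq> Y \<Longrightarrow> cl_span X \<subseteq> cl_span Y"
  unfolding cl_span_def using c_span_mono by blast

lemma mem_cl_span:
  assumes "v \<in> X" "X \<subseteq> l2"
  shows "v \<in> cl_span X"
proof -
  have "v \<in> c_span X"
    unfolding c_span_def using assms(1) by (auto intro!: exI[of _ 1] exI[of _ "\<lambda>_. 1"] exI[of _ "\<lambda>_. v"])
  then show ?thesis
    using assms unfolding cl_span_def by (auto intro!: bexI[of _ v])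
qed

lemma zero_in_cl_span: "(\<lambda>x. 0) \<in> cl_span X"
proof -
  have "(\<lambda>x. 0) \<in> c_span X"
    unfolding c_span_def by (auto intro!: exI[of _ 0])
  then show ?thesis
    unfolding cl_span_def by (auto simp: l2_zero intro!: bexI[of _ "\<lambda>x. 0"])
qed

lemma ip_c_span_orthogonal:
  assumes "X \<subseteq> l2" "Y \<subseteq> l2" "\<forall>x\<in>X. \<forall>y\<in>Y. ip x y = 0"
    and "f \<in> c_span X" "g \<in> c_span Y"
  shows "ip f g = 0"
proof -
  obtain n c v where v: "\<forall>i<n. v i \<in> X" and f: "f = (\<lambda>x. \<Sum>i<(n::nat). c i * v i x)"
    using assms(4) by (auto simp: c_span_def)
  obtain m d w where w: "\<forall>j<m. w j \<in> Y" and g: "g = (\<lambda>x. \<Sum>j<(m::nat). d j * w j x)"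
    using assms(5) by (auto simp: c_span_def)
  have v_l2: "v i \<in> l2" if "i < n" for i
    using v assms(1) that by blast
  have w_l2: "w j \<in> l2" if "j < m" for j
    using w assms(2) that by blast
  have "ip f (w j) = 0" if "j < m" for j
  proof -
    have "ip f (w j) = (\<Sum>i<n. cnj (c i) * ip (v i) (w j))"
      unfolding f using v_l2 w_l2[OF that]
      by (subst ip_sum_left) (auto intro: l2_scale simp: ip_scale_left)
    then show ?thesis
      using v w assms(3) that by simp
  qed
  then show ?thesis
    unfolding g using w_l2 c_span_l2[OF assms(1,4)]
    by (subst ip_sum_right) (auto intro: l2_scale simp: ip_scale_right)
qed

lemma cmod_ip_le_near_orthogonal:
  assumes l2: "f \<in> l2" "g \<in> l2" "f' \<in> l2" "g' \<in> l2" and "ip f' g' = 0"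
    and close: "l2norm (\<lambda>x. f x - f' x) \<le> e" "l2norm (\<lambda>x. g x - g' x) \<le> e"
  shows "cmod (ip f g) \<le> e * (l2norm f + l2norm g) + e * e"
proof -
  define df dg where "df = (\<lambda>x. f x - f' x)" and "dg = (\<lambda>x. g x - g' x)"
  have d_l2: "df \<in> l2" "dg \<in> l2"
    using l2 by (auto simp: df_def dg_def intro!: l2_diff)
  have "f' = (\<lambda>x. f x - df x)" "g' = (\<lambda>x. g x - dg x)"
    by (auto simp: df_def dg_def)
  then have "ip f g - ip f dg - (ip df g - ip df dg) = 0"
    using assms(5) l2 d_l2 by (simp add: ip_diff_left ip_diff_right l2_diff)
  then have "ip f g = ip df g + ip f dg - ip df dg"
    by (simp add: algebra_simps)
  then have "cmod (ip f g) \<le> cmod (ip df g + ip f dg) + cmod (ip df dg)"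
    by (simp add: norm_triangle_ineq4)
  also have "\<dots> \<le> cmod (ip df g) + cmod (ip f dg) + cmod (ip df dg)"
    by (intro add_right_mono norm_triangle_ineq)
  also have "\<dots> \<le> l2norm df * l2norm g + l2norm f * l2norm dg + l2norm df * l2norm dg"
    using l2 d_l2 by (intro add_mono cauchy_schwarz)
  also have "\<dots> \<le> e * l2norm g + l2norm f * e + e * e"
    using close order_trans[OF l2norm_nonneg close(1)] unfolding df_def[symmetric] dg_def[symmetric]
    by (intro add_mono mult_mono) (auto simp: l2norm_nonneg)
  finally show ?thesis
    by (simp add: algebra_simps)
qed

lemma ip_cl_span_orthogonal:
  assumes "X \<subseteq> l2" "Y \<subseteq> l2" "\<forall>x\<in>X. \<forall>y\<in>Y. ip x y = 0"
    and f: "f \<in> cl_span X" and g: "g \<in> cl_span Y"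
  shows "ip f g = 0"
proof -
  have "f \<in> l2" "g \<in> l2"
    using f g by (auto simp: cl_span_def)
  have bound: "cmod (ip f g) \<le> e * (l2norm f + l2norm g) + e * e" if "e > 0" for e
  proof -
    obtain f' where f': "f' \<in> c_span X" "l2norm (\<lambda>x. f x - f' x) < e"
      using f \<open>e > 0\<close> by (auto simp: cl_span_def)
    obtain g' where g': "g' \<in> c_span Y" "l2norm (\<lambda>x. g x - g' x) < e"
      using g \<open>e > 0\<close> by (auto simp: cl_span_def)
    show ?thesis
      using \<open>f \<in> l2\<close> \<open>g \<in> l2\<close> c_span_l2[OF assms(1) f'(1)] c_span_l2[OF assms(2) g'(1)]
        ip_c_span_orthogonal[OF assms(1-3) f'(1) g'(1)] f'(2) g'(2)
      by (intro cmod_ip_le_near_orthogonal) auto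
  qed
  have "((\<lambda>e. e * (l2norm f + l2norm g) + e * e) \<longlongrightarrow> 0 * (l2norm f + l2norm g) + 0 * 0)
      (at_right (0::real))"
    by (intro tendsto_intros)
  then have "((\<lambda>e. e * (l2norm f + l2norm g) + e * e) \<longlongrightarrow> 0) (at_right 0)"
    by simp
  moreover have "\<forall>\<^sub>F e in at_right 0. cmod (ip f g) \<le> e * (l2norm f + l2norm g) + e * e"
    using eventually_at_right_less by (rule eventually_mono) (rule bound)
  ultimately have "cmod (ip f g) \<le> 0"
    by (rule tendsto_lowerbound[OF _ _ trivial_limit_at_right_real])
  then show ?thesis
    by simp
qed

definition l2_linear :: "(('a \<Rightarrow> complex) \<Rightarrow> ('a \<Rightarrow> complex)) \<Rightarrow> bool" where
  "l2_linear A \<longleftrightarrow> (\<forall>f\<in>l2. A f \<in> l2) \<and>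
     (\<forall>f\<in>l2. \<forall>g\<in>l2. A (\<lambda>x. f x + g x) = (\<lambda>x. A f x + A g x)) \<and>
     (\<forall>f\<in>l2. \<forall>c. A (\<lambda>x. c * f x) = (\<lambda>x. c * A f x))"

lemma bounded_op_imp_l2_linear: "bounded_op A \<Longrightarrow> l2_linear A"
  by (simp add: bounded_op_def l2_linear_def)

lemma bounded_opI:
  "l2_linear A \<Longrightarrow> (\<And>f. f \<in> l2 \<Longrightarrow> l2norm (A f) \<le> C * l2norm f) \<Longrightarrow> bounded_op A"
  unfolding bounded_op_def l2_linear_def by blast

lemma l2_linear_l2: "l2_linear A \<Longrightarrow> f \<in> l2 \<Longrightarrow> A f \<in> l2"
  by (simp add: l2_linear_def)

lemma l2_linear_add:
  "l2_linear A \<Longrightarrow> f \<in> l2 \<Longrightarrow> g \<in> l2 \<Longrightarrow> A (\<lambda>x. f x + g x) = (\<lambda>x. A f x + A g x)"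
  by (simp add: l2_linear_def)

lemma l2_linear_scale: "l2_linear A \<Longrightarrow> f \<in> l2 \<Longrightarrow> A (\<lambda>x. c * f x) = (\<lambda>x. c * A f x)"
  by (simp add: l2_linear_def)

lemma l2_linear_zero: "l2_linear A \<Longrightarrow> A (\<lambda>x. 0) = (\<lambda>x. 0)"
  using l2_linear_scale[of A "\<lambda>x. 0" 0] l2_zero by simp

lemma l2_linear_sum:
  assumes "l2_linear A" "\<And>i. i \<in> F \<Longrightarrow> f i \<in> l2"
  shows "A (\<lambda>x. \<Sum>i\<in>F. f i x) = (\<lambda>x. \<Sum>i\<in>F. A (f i) x)"
  using assms(2)
proof (induction F rule: infinite_finite_induct)
  case (insert a F)
  then have "A (\<lambda>x. f a x + (\<Sum>i\<in>F. f i x)) = (\<lambda>x. A (f a) x + A (\<lambda>x. \<Sum>i\<in>F. f i x) x)"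
    by (intro l2_linear_add[OF assms(1)] l2_sum) auto
  with insert show ?case
    by simp
qed (simp_all add: l2_linear_zero[OF assms(1)])

lemma l2_linear_id: "l2_linear id"
  unfolding l2_linear_def by auto

lemma l2_linear_comp: "l2_linear A \<Longrightarrow> l2_linear B \<Longrightarrow> l2_linear (A \<circ> B)"
  unfolding l2_linear_def by (auto simp: o_def)

lemma l2_linear_sum_ops:
  assumes "\<And>i. i \<in> F \<Longrightarrow> l2_linear (A i)"
  shows "l2_linear (\<lambda>f x. \<Sum>i\<in>F. A i f x)"
  using assms
  by (auto simp: l2_linear_def l2_linear_add l2_linear_scale sum.distrib sum_distrib_left
      intro!: l2_sum)

section \<open>Representations of the Cuntz algebra\<close>

lemma opw_append: "opw S (K @ L) = opw S K \<circ> opw S L"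
  by (induction K) auto

lemma words_0 [simp]: "words N 0 = {[]}"
  by (auto simp: words_def)

lemma words_Suc: "words N (Suc n) = (\<lambda>(a, K). a # K) ` ({1..N} \<times> words N n)"
  by (auto simp: words_def length_Suc_conv image_iff)

lemma finite_words: "finite (words N n)"
  unfolding words_def using finite_lists_length_eq[of "{1..N}" n] by (simp add: conj_commute)

lemma words_letters: "K \<in> words N n \<Longrightarrow> set K \<subseteq> {1..N}"
  by (simp add: words_def)

locale cuntz_representation =
  fixes N :: nat and S Sa :: "nat \<Rightarrow> ('a \<Rightarrow> complex) \<Rightarrow> ('a \<Rightarrow> complex)"
  assumes cuntz: "cuntz_rep N S Sa"
begin

lemma S_linear: "a \<in> {1..N} \<Longrightarrow> l2_linear (S a)"
  using cuntz by (auto simp: cuntz_rep_def intro: bounded_op_imp_l2_linear)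

lemma Sa_linear: "a \<in> {1..N} \<Longrightarrow> l2_linear (Sa a)"
  using cuntz by (auto simp: cuntz_rep_def intro: bounded_op_imp_l2_linear)

lemma ip_S_left: "a \<in> {1..N} \<Longrightarrow> f \<in> l2 \<Longrightarrow> g \<in> l2 \<Longrightarrow> ip (S a f) g = ip f (Sa a g)"
  using cuntz by (auto simp: cuntz_rep_def)

lemma Sa_S:
  "i \<in> {1..N} \<Longrightarrow> j \<in> {1..N} \<Longrightarrow> f \<in> l2 \<Longrightarrow> Sa i (S j f) = (if i = j then f else (\<lambda>x. 0))"
  using cuntz by (auto simp: cuntz_rep_def)

lemma sum_S_Sa: "f \<in> l2 \<Longrightarrow> (\<lambda>x. \<Sum>i=1..N. S i (Sa i f) x) = f"
  using cuntz by (auto simp: cuntz_rep_def)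

lemma opw_linear: "set K \<subseteq> {1..N} \<Longrightarrow> l2_linear (opw S K)"
  by (induction K) (auto simp: l2_linear_id intro!: l2_linear_comp S_linear)

lemma opa_linear: "set K \<subseteq> {1..N} \<Longrightarrow> l2_linear (opa Sa K)"
  by (induction K) (auto simp: l2_linear_id intro!: l2_linear_comp Sa_linear)

lemma opw_l2: "set K \<subseteq> {1..N} \<Longrightarrow> f \<in> l2 \<Longrightarrow> opw S K f \<in> l2"
  using opw_linear l2_linear_l2 by blast

lemma opa_l2: "set K \<subseteq> {1..N} \<Longrightarrow> f \<in> l2 \<Longrightarrow> opa Sa K f \<in> l2"
  using opa_linear l2_linear_l2 by blast

lemma opw_zero: "set K \<subseteq> {1..N} \<Longrightarrow> opw S K (\<lambda>x. 0) = (\<lambda>x. 0)"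
  using opw_linear l2_linear_zero by blast

lemma opa_zero: "set K \<subseteq> {1..N} \<Longrightarrow> opa Sa K (\<lambda>x. 0) = (\<lambda>x. 0)"
  using opa_linear l2_linear_zero by blast

lemma ip_opw_left:
  "set K \<subseteq> {1..N} \<Longrightarrow> f \<in> l2 \<Longrightarrow> g \<in> l2 \<Longrightarrow> ip (opw S K f) g = ip f (opa Sa K g)"
proof (induction K arbitrary: g)
  case (Cons a K)
  then have "ip (S a (opw S K f)) g = ip (opw S K f) (Sa a g)"
    by (intro ip_S_left opw_l2) auto
  also have "\<dots> = ip f (opa Sa K (Sa a g))"
    using Cons Sa_linear l2_linear_l2 by (intro Cons.IH) auto
  finally show ?case
    by simp
qed simp

lemma ip_opw_right:
  "set K \<subseteq> {1..N} \<Longrightarrow> f \<in> l2 \<Longrightarrow> g \<in> l2 \<Longrightarrow> ip f (opw S K g) = ip (opa Sa K f) g"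
  using ip_opw_left[of K g f] ip_swap[of f] ip_swap[of "opa Sa K f"] by simp

lemma opa_opw_prefix:
  "set K \<subseteq> {1..N} \<Longrightarrow> set L \<subseteq> {1..N} \<Longrightarrow> length K \<le> length L \<Longrightarrow> f \<in> l2 \<Longrightarrow>
   opa Sa K (opw S L f) = (if K = take (length K) L then opw S (drop (length K) L) f else (\<lambda>x. 0))"
proof (induction K arbitrary: L)
  case (Cons a K)
  then obtain b L' where L: "L = b # L'"
    by (cases L) auto
  have "opw S L' f \<in> l2"
    using Cons.prems L by (intro opw_l2) auto
  then have "opa Sa (a # K) (opw S L f) = opa Sa K (if a = b then opw S L' f else (\<lambda>x. 0))"
    using Cons.prems L by (simp add: Sa_S)
  then show ?case
    using Cons L by (auto simp: opa_zero)
qed simp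

lemma opa_opw_same_length:
  "set K \<subseteq> {1..N} \<Longrightarrow> set L \<subseteq> {1..N} \<Longrightarrow> length K = length L \<Longrightarrow> f \<in> l2 \<Longrightarrow>
   opa Sa K (opw S L f) = (if K = L then f else (\<lambda>x. 0))"
  by (subst opa_opw_prefix) auto

lemma opa_opw_cancel: "set K \<subseteq> {1..N} \<Longrightarrow> f \<in> l2 \<Longrightarrow> opa Sa K (opw S K f) = f"
  by (simp add: opa_opw_same_length)

lemma ip_opw_opw:
  "set K \<subseteq> {1..N} \<Longrightarrow> set L \<subseteq> {1..N} \<Longrightarrow> length K = length L \<Longrightarrow> f \<in> l2 \<Longrightarrow> g \<in> l2 \<Longrightarrow>
   ip (opw S K f) (opw S L g) = (if K = L then ip f g else 0)"
  by (simp add: ip_opw_left opw_l2 opa_opw_same_length)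

lemma l2norm_opw: "set K \<subseteq> {1..N} \<Longrightarrow> f \<in> l2 \<Longrightarrow> l2norm (opw S K f) = l2norm f"
  by (simp add: l2norm_eq_sqrt_ip opw_l2 ip_opw_opw)

lemma sum_opw_opa_words: "f \<in> l2 \<Longrightarrow> (\<lambda>x. \<Sum>K\<in>words N n. opw S K (opa Sa K f) x) = f"
proof (induction n arbitrary: f)
  case (Suc n)
  have inj: "inj_on (\<lambda>(a, K). a # K) ({1..N} \<times> words N n)"
    by (auto simp: inj_on_def)
  have S_sum: "S a (\<lambda>y. \<Sum>K\<in>words N n. opw S K (opa Sa K (Sa a f)) y)
      = (\<lambda>y. \<Sum>K\<in>words N n. S a (opw S K (opa Sa K (Sa a f))) y)" if "a \<in> {1..N}" for a
    using Suc.prems that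
    by (intro l2_linear_sum S_linear opw_l2 opa_l2 l2_linear_l2[OF Sa_linear] words_letters)
  have "(\<lambda>x. \<Sum>K\<in>words N (Suc n). opw S K (opa Sa K f) x)
      = (\<lambda>x. \<Sum>(a, K)\<in>{1..N} \<times> words N n. S a (opw S K (opa Sa K (Sa a f))) x)"
    unfolding words_Suc by (subst sum.reindex[OF inj]) (simp add: case_prod_unfold)
  also have "\<dots> = (\<lambda>x. \<Sum>a=1..N. \<Sum>K\<in>words N n. S a (opw S K (opa Sa K (Sa a f))) x)"
    by (simp add: sum.cartesian_product)
  also have "\<dots> = (\<lambda>x. \<Sum>a=1..N. S a (\<lambda>y. \<Sum>K\<in>words N n. opw S K (opa Sa K (Sa a f)) y) x)"
    by (simp add: S_sum)
  also have "\<dots> = (\<lambda>x. \<Sum>a=1..N. S a (Sa a f) x)"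
    using Suc by (simp add: l2_linear_l2[OF Sa_linear])
  also have "\<dots> = f"
    using Suc.prems by (rule sum_S_Sa)
  finally show ?case .
qed simp

end

section \<open>The endomorphism \<open>\<psi>\<^sub>\<sigma>\<close>\<close>

locale cuntz_permutation = cuntz_representation +
  fixes l :: nat and \<sigma> :: "nat list \<Rightarrow> nat list"
  assumes perm: "\<sigma> permutes words N l"
begin

abbreviation "U \<equiv> u_op N l \<sigma> S Sa"
abbreviation "Ua \<equiv> u_adj_op N l \<sigma> S Sa"

lemmas words_l_letters = words_letters[where n = l]

lemma \<sigma>_words: "K \<in> words N l \<Longrightarrow> \<sigma> K \<in> words N l"
  using permutes_in_image[OF perm] by blast

lemma inv_\<sigma>_words: "K \<in> words N l \<Longrightarrow> inv \<sigma> K \<in> words N l"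
  using permutes_in_image[OF permutes_inv[OF perm]] by blast

lemma \<sigma>_inv: "\<sigma> (inv \<sigma> K) = K" and inv_\<sigma>: "inv \<sigma> (\<sigma> K) = K"
  using permutes_inverses[OF perm] by auto

lemma U_linear: "l2_linear U"
proof -
  have "l2_linear (opw S (\<sigma> K) \<circ> opa Sa K)" if "K \<in> words N l" for K
    by (intro l2_linear_comp opw_linear opa_linear words_l_letters \<sigma>_words that)
  then have "l2_linear (\<lambda>f x. \<Sum>K\<in>words N l. (opw S (\<sigma> K) \<circ> opa Sa K) f x)"
    by (rule l2_linear_sum_ops)
  then show ?thesis
    by (simp add: u_op_def[abs_def])
qed

lemma Ua_linear: "l2_linear Ua"
proof -
  have "l2_linear (opw S K \<circ> opa Sa (\<sigma> K))" if "K \<in> words N l" for K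
    by (intro l2_linear_comp opw_linear opa_linear words_l_letters \<sigma>_words that)
  then have "l2_linear (\<lambda>f x. \<Sum>K\<in>words N l. (opw S K \<circ> opa Sa (\<sigma> K)) f x)"
    by (rule l2_linear_sum_ops)
  then show ?thesis
    by (simp add: u_adj_op_def[abs_def])
qed

lemma U_l2: "f \<in> l2 \<Longrightarrow> U f \<in> l2"
  using U_linear l2_linear_l2 by blast

lemma Ua_l2: "f \<in> l2 \<Longrightarrow> Ua f \<in> l2"
  using Ua_linear l2_linear_l2 by blast

lemma U_opw:
  assumes K: "K \<in> words N l" and "g \<in> l2"
  shows "U (opw S K g) = opw S (\<sigma> K) g"
proof -
  have "opw S (\<sigma> K') (opa Sa K' (opw S K g)) = (if K' = K then opw S (\<sigma> K) g else (\<lambda>x. 0))"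
    if K': "K' \<in> words N l" for K'
  proof -
    have "opa Sa K' (opw S K g) = (if K' = K then g else (\<lambda>x. 0))"
      by (rule opa_opw_same_length) (use assms K' in \<open>auto simp: words_def\<close>)
    then show ?thesis
      using opw_zero[OF words_letters[OF \<sigma>_words[OF K']]] by auto
  qed
  then show ?thesis
    using K finite_words by (simp add: u_op_def if_distrib[of "\<lambda>f. f _"] cong: sum.cong)
qed

lemma Ua_opw:
  assumes K: "K \<in> words N l" and "g \<in> l2"
  shows "Ua (opw S K g) = opw S (inv \<sigma> K) g"
proof -
  have "opw S K' (opa Sa (\<sigma> K') (opw S K g)) = (if K' = inv \<sigma> K then opw S (inv \<sigma> K) g else (\<lambda>x. 0))"
    if K': "K' \<in> words N l" for K'
  proof -
    have "opa Sa (\<sigma> K') (opw S K g) = (if \<sigma> K' = K then g else (\<lambda>x. 0))"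
      by (rule opa_opw_same_length) (use assms \<sigma>_words[OF K'] in \<open>auto simp: words_def\<close>)
    moreover have "\<sigma> K' = K \<longleftrightarrow> K' = inv \<sigma> K"
      using \<sigma>_inv inv_\<sigma> by metis
    ultimately show ?thesis
      using opw_zero[OF words_letters[OF K']] by auto
  qed
  then show ?thesis
    using K finite_words inv_\<sigma>_words
    by (simp add: u_adj_op_def if_distrib[of "\<lambda>f. f _"] cong: sum.cong)
qed

lemma Ua_U:
  assumes "f \<in> l2"
  shows "Ua (U f) = f"
proof -
  have "Ua (U f) = (\<lambda>x. \<Sum>K\<in>words N l. Ua (opw S (\<sigma> K) (opa Sa K f)) x)"
    unfolding u_op_def using assms
    by (intro l2_linear_sum[OF Ua_linear] opw_l2 opa_l2 words_l_letters \<sigma>_words)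
  also have "\<dots> = (\<lambda>x. \<Sum>K\<in>words N l. opw S K (opa Sa K f) x)"
    using assms by (simp add: Ua_opw \<sigma>_words opa_l2 words_l_letters inv_\<sigma>)
  also have "\<dots> = f"
    using assms by (rule sum_opw_opa_words)
  finally show ?thesis .
qed

lemma U_Ua:
  assumes "f \<in> l2"
  shows "U (Ua f) = f"
proof -
  have "U (Ua f) = (\<lambda>x. \<Sum>K\<in>words N l. U (opw S K (opa Sa (\<sigma> K) f)) x)"
    unfolding u_adj_op_def using assms
    by (intro l2_linear_sum[OF U_linear] opw_l2 opa_l2 words_l_letters \<sigma>_words)
  also have "\<dots> = (\<lambda>x. \<Sum>K\<in>\<sigma> ` words N l. opw S K (opa Sa K f) x)"
    using assms permutes_inj_on[OF perm]
    by (simp add: U_opw opa_l2 words_l_letters \<sigma>_words sum.reindex)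
  also have "\<dots> = f"
    using assms by (simp add: permutes_image[OF perm] sum_opw_opa_words)
  finally show ?thesis .
qed

lemma ip_U_left:
  assumes "f \<in> l2" "g \<in> l2"
  shows "ip (U f) g = ip f (Ua g)"
proof -
  have "ip (U f) g = (\<Sum>K\<in>words N l. ip (opw S (\<sigma> K) (opa Sa K f)) g)"
    unfolding u_op_def using assms
    by (intro ip_sum_left opw_l2 opa_l2 words_l_letters \<sigma>_words)
  also have "\<dots> = (\<Sum>K\<in>words N l. ip f (opw S K (opa Sa (\<sigma> K) g)))"
    using assms
    by (intro sum.cong refl)
      (simp add: ip_opw_left ip_opw_right opa_l2 words_l_letters \<sigma>_words)
  also have "\<dots> = ip f (Ua g)"
    unfolding u_adj_op_def using assms
    by (intro ip_sum_right[symmetric] opw_l2 opa_l2 words_l_letters \<sigma>_words)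
  finally show ?thesis .
qed

lemma l2norm_U: "f \<in> l2 \<Longrightarrow> l2norm (U f) = l2norm f"
  by (simp add: l2norm_eq_sqrt_ip U_l2 ip_U_left Ua_U)

lemma l2norm_Ua: "f \<in> l2 \<Longrightarrow> l2norm (Ua f) = l2norm f"
  using ip_U_left[OF Ua_l2, of f f] by (simp add: l2norm_eq_sqrt_ip Ua_l2 U_Ua)

lemma cuntz_rep_comp_psi: "cuntz_rep N (comp_psi_S N l \<sigma> S Sa) (comp_psi_Sa N l \<sigma> S Sa)"
  unfolding cuntz_rep_def comp_psi_S_def comp_psi_Sa_def
proof (intro conjI ballI)
  fix i assume i: "i \<in> {1..N}"
  have "bounded_op (S i)" "bounded_op (Sa i)"
    using cuntz i by (simp_all add: cuntz_rep_def)
  then obtain C C' where C: "\<forall>f\<in>l2. l2norm (S i f) \<le> C * l2norm f"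
    and C': "\<forall>f\<in>l2. l2norm (Sa i f) \<le> C' * l2norm f"
    unfolding bounded_op_def by blast
  show "bounded_op (U \<circ> S i)"
    using i C by (intro bounded_opI[of _ C] l2_linear_comp U_linear S_linear)
      (simp_all add: l2norm_U l2_linear_l2[OF S_linear])
  show "bounded_op (Sa i \<circ> Ua)"
  proof (rule bounded_opI[of _ C'])
    show "l2_linear (Sa i \<circ> Ua)"
      using i by (intro l2_linear_comp Ua_linear Sa_linear)
    show "l2norm ((Sa i \<circ> Ua) f) \<le> C' * l2norm f" if "f \<in> l2" for f
      using C' Ua_l2[OF that] l2norm_Ua[OF that] by fastforce
  qed
  show "ip ((U \<circ> S i) f) g = ip f ((Sa i \<circ> Ua) g)" if "f \<in> l2" "g \<in> l2" for f g
    using i that by (simp add: ip_U_left ip_S_left l2_linear_l2[OF S_linear] Ua_l2)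
  fix j and f :: "'a \<Rightarrow> complex" assume "j \<in> {1..N}" "f \<in> l2"
  then show "(Sa i \<circ> Ua) ((U \<circ> S j) f) = (if i = j then f else (\<lambda>x. 0))"
    using i by (simp add: Ua_U l2_linear_l2[OF S_linear] Sa_S)
next
  fix f :: "'a \<Rightarrow> complex" assume f: "f \<in> l2"
  have "(\<lambda>x. \<Sum>i = 1..N. U (S i (Sa i (Ua f))) x) = U (\<lambda>x. \<Sum>i = 1..N. S i (Sa i (Ua f)) x)"
    using f by (intro l2_linear_sum[OF U_linear, symmetric])
      (simp add: l2_linear_l2[OF S_linear] l2_linear_l2[OF Sa_linear] Ua_l2)
  also have "\<dots> = f"
    using f by (simp add: sum_S_Sa Ua_l2 U_Ua)
  finally show "f = (\<lambda>x. \<Sum>i = 1..N. (U \<circ> S i) ((Sa i \<circ> Ua) f) x)"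
    by simp
qed

end

section \<open>The semi-Mealy machine\<close>

lemma wpow_0 [simp]: "wpow J 0 = []"
  by (simp add: wpow_def)

lemma wpow_Suc: "wpow J (Suc n) = J @ wpow J n"
  by (simp add: wpow_def)

lemma wpow_add: "wpow J (a + b) = wpow J a @ wpow J b"
  by (simp add: wpow_def replicate_add)

lemma wpow_Suc_right: "wpow J (Suc n) = wpow J n @ J"
  using wpow_add[of J n 1] by (simp add: wpow_def One_nat_def)

lemma length_wpow [simp]: "length (wpow J n) = n * length J"
  by (induction n) (auto simp: wpow_Suc)

lemma set_wpow: "set (wpow J n) \<subseteq> set J"
  by (induction n) (auto simp: wpow_Suc)

lemma wpow_split:
  assumes "a < r"
  shows "wpow J r = wpow J a @ J @ wpow J (r - Suc a)"
  using assms wpow_add[of J a "Suc (r - Suc a)"] by (simp add: wpow_Suc)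

lemma take_wpow:
  "a < r \<Longrightarrow> b < length J \<Longrightarrow> take (a * length J + b) (wpow J r) = wpow J a @ take b J"
  by (simp add: wpow_split)

lemma drop_wpow:
  "a < r \<Longrightarrow> b < length J \<Longrightarrow> drop (a * length J + b) (wpow J r) = drop b J @ wpow J (r - Suc a)"
  by (simp add: wpow_split)

lemma delta_w_append: "delta_w \<sigma> q (u @ v) = delta_w \<sigma> (delta_w \<sigma> q u) v"
  by (induction u arbitrary: q) auto

lemma lambda_w_append: "lambda_w \<sigma> q (u @ v) = lambda_w \<sigma> q u @ lambda_w \<sigma> (delta_w \<sigma> q u) v"
  by (induction u arbitrary: q) auto

lemma length_lambda_w [simp]: "length (lambda_w \<sigma> q w) = length w"
  by (induction w arbitrary: q) auto

lemma drop_lambda_w: "drop m (lambda_w \<sigma> q w) = lambda_w \<sigma> (delta_w \<sigma> q (take m w)) (drop m w)"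
  using lambda_w_append[of \<sigma> q "take m w" "drop m w"] by (cases "m \<le> length w") simp_all

locale mealy_machine =
  fixes N l :: nat and \<sigma> :: "nat list \<Rightarrow> nat list" and J :: "nat list"
  assumes perm: "\<sigma> permutes words N l" and l_pos: "l \<ge> 1"
    and J_nonempty: "length J \<ge> 1" and J_letters: "set J \<subseteq> {1..N}"
begin

abbreviation "Q \<equiv> words N (l - 1)"
abbreviation "\<delta> \<equiv> delta_w \<sigma>"
abbreviation "orb \<equiv> orbit_state \<sigma> J"

lemma length_J_pos: "length J > 0"
  using J_nonempty by linarith

lemma wpow_letters: "set (wpow J n) \<subseteq> {1..N}"
  using set_wpow J_letters by blast

lemma Q_letters: "q \<in> Q \<Longrightarrow> set q \<subseteq> {1..N}"
  by (simp add: words_def)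

lemma Q_length: "q \<in> Q \<Longrightarrow> length q = l - 1"
  by (simp add: words_def)

lemma take_in_Q: "set K \<subseteq> {1..N} \<Longrightarrow> length K \<ge> l - 1 \<Longrightarrow> take (l - 1) K \<in> Q"
  by (auto simp: words_def dest: in_set_takeD)

lemma replicate_in_Q: "replicate (l - 1) (hd J) \<in> Q"
  using J_nonempty J_letters by (cases J) (auto simp: words_def)

lemma inv_\<sigma>_snoc: "q \<in> Q \<Longrightarrow> c \<in> {1..N} \<Longrightarrow> inv \<sigma> (q @ [c]) \<in> words N l"
  using permutes_in_image[OF permutes_inv[OF perm], of "q @ [c]"] l_pos by (auto simp: words_def)

lemma mealy_lambda_Cons_delta:
  "q \<in> Q \<Longrightarrow> c \<in> {1..N} \<Longrightarrow> mealy_lambda \<sigma> q c # mealy_delta \<sigma> q c = inv \<sigma> (q @ [c])"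
  using inv_\<sigma>_snoc[of q c] l_pos unfolding mealy_lambda_def mealy_delta_def words_def
  by (cases "inv \<sigma> (q @ [c])") auto

lemma \<sigma>_mealy: "q \<in> Q \<Longrightarrow> c \<in> {1..N} \<Longrightarrow> \<sigma> (mealy_lambda \<sigma> q c # mealy_delta \<sigma> q c) = q @ [c]"
  by (simp add: mealy_lambda_Cons_delta permutes_inverses(1)[OF perm])

lemma mealy_delta_in_Q: "q \<in> Q \<Longrightarrow> c \<in> {1..N} \<Longrightarrow> mealy_delta \<sigma> q c \<in> Q"
  using inv_\<sigma>_snoc[of q c] mealy_lambda_Cons_delta[of q c, symmetric] by (auto simp: words_def)

lemma mealy_lambda_letter: "q \<in> Q \<Longrightarrow> c \<in> {1..N} \<Longrightarrow> mealy_lambda \<sigma> q c \<in> {1..N}"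
  using inv_\<sigma>_snoc[of q c] mealy_lambda_Cons_delta[of q c, symmetric] by (auto simp: words_def)

lemma delta_w_in_Q: "q \<in> Q \<Longrightarrow> set w \<subseteq> {1..N} \<Longrightarrow> \<delta> q w \<in> Q"
  by (induction w arbitrary: q) (auto simp: mealy_delta_in_Q)

lemma lambda_w_letters: "q \<in> Q \<Longrightarrow> set w \<subseteq> {1..N} \<Longrightarrow> set (lambda_w \<sigma> q w) \<subseteq> {1..N}"
proof (induction w arbitrary: q)
  case (Cons a w)
  then show ?case
    using mealy_lambda_letter[of q a] mealy_delta_in_Q[of q a] by auto
qed simp

definition run :: "nat list \<Rightarrow> nat \<Rightarrow> nat list" where
  "run q n = \<delta> q (wpow J n)"

lemma run_add: "run q (m + n) = run (run q m) n"
  by (simp add: run_def wpow_add delta_w_append)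

lemma run_in_Q: "q \<in> Q \<Longrightarrow> run q n \<in> Q"
  by (simp add: run_def delta_w_in_Q wpow_letters)

lemma orbit_state_run: "orb q = {run q n | n. n \<ge> 1}"
  by (auto simp: orbit_state_def run_def)

lemma periodic_statesI: "q \<in> Q \<Longrightarrow> n \<ge> 1 \<Longrightarrow> run q n = q \<Longrightarrow> q \<in> periodic_states N l \<sigma> J"
  by (auto simp: periodic_states_def run_def)

lemma run_card_Q_periodic:
  assumes "q \<in> Q"
  shows "run q (card Q) \<in> periodic_states N l \<sigma> J"
proof -
  have "\<not> inj_on (run q) {0..card Q}"
  proof
    assume "inj_on (run q) {0..card Q}"
    then have "card {0..card Q} \<le> card Q"
      using card_inj_on_le[of "run q" "{0..card Q}" Q] run_in_Q[OF assms] finite_words by auto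
    then show False
      by simp
  qed
  then obtain a b where ab: "a < b" "b \<le> card Q" "run q a = run q b"
    unfolding inj_on_def by (metis atLeastAtMost_iff linorder_neqE_nat zero_le)
  have "card Q + (b - a) = b + (card Q - a)" "a + (card Q - a) = card Q"
    using ab by auto
  then have "run (run q (card Q)) (b - a) = run (run q b) (card Q - a)"
    by (metis run_add)
  also have "\<dots> = run q (card Q)"
    using ab \<open>a + (card Q - a) = card Q\<close> by (metis run_add)
  finally show ?thesis
    using ab by (intro periodic_statesI run_in_Q assms) auto
qed

lemma periodic_states_nonempty: "periodic_states N l \<sigma> J \<noteq> {}"
  using run_card_Q_periodic[OF replicate_in_Q] by blast

context
  fixes p assumes p: "p \<in> periodic_states N l \<sigma> J"
begin

definition period :: nat where
  "period = (LEAST n. n \<ge> 1 \<and> run p n = p)"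

lemma period_pos: "period \<ge> 1" and run_period: "run p period = p"
proof -
  have "\<exists>n. n \<ge> 1 \<and> run p n = p"
    using p by (auto simp: periodic_states_def run_def)
  from LeastI_ex[OF this] show "period \<ge> 1" "run p period = p"
    unfolding period_def by auto
qed

lemma run_less_period: "1 \<le> n \<Longrightarrow> n < period \<Longrightarrow> run p n \<noteq> p"
  using not_less_Least unfolding period_def by blast

lemma periodic_in_Q: "p \<in> Q"
  using p by (simp add: periodic_states_def)

lemma run_add_mult_period: "run p (n + j * period) = run p n"
proof (induction j)
  case (Suc j)
  have "run p (n + Suc j * period) = run (run p period) (n + j * period)"
    by (simp add: run_add[symmetric] algebra_simps)
  then show ?case
    using Suc by (simp add: run_period)
qed simp

lemma run_mod_period: "run p n = run p (n mod period)"
  using run_add_mult_period[of "n mod period" "n div period"] by simp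

lemma run_inj_on_period: "inj_on (run p) {1..period}"
proof (rule inj_onI)
  have neq: "run p x \<noteq> run p y" if "1 \<le> x" "x < y" "y \<le> period" for x y
  proof
    assume "run p x = run p y"
    then have "run p (x + (period - y)) = run p (y + (period - y))"
      by (simp add: run_add)
    then have "run p (x + (period - y)) = p"
      using that run_period by simp
    moreover have "1 \<le> x + (period - y)" "x + (period - y) < period"
      using that by auto
    ultimately show False
      using run_less_period by blast
  qed
  fix x y assume "x \<in> {1..period}" "y \<in> {1..period}" "run p x = run p y"
  then show "x = y"
    using neq[of x y] neq[of y x] by (cases x y rule: linorder_cases) auto
qed

lemma orbit_state_periodic: "orb p = run p ` {1..period}"
proof
  show "run p ` {1..period} \<subseteq> orb p"
    by (auto simp: orbit_state_run)
  show "orb p \<subseteq> run p ` {1..period}"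
  proof
    fix q assume "q \<in> orb p"
    then obtain n where "q = run p n"
      by (auto simp: orbit_state_run)
    then have q: "q = run p (n mod period)"
      using run_mod_period by simp
    show "q \<in> run p ` {1..period}"
    proof (cases "n mod period = 0")
      case True
      then show ?thesis
        using q period_pos run_period by (auto simp: run_def intro!: image_eqI[of _ _ period])
    next
      case False
      then show ?thesis
        using q period_pos by (auto intro!: image_eqI[of _ _ "n mod period"] less_imp_le)
    qed
  qed
qed

lemma card_orbit_state: "card (orb p) = period"
  using run_inj_on_period by (simp add: orbit_state_periodic card_image)

lemma mem_orbit_state_self: "p \<in> orb p"
  using period_pos run_period by (auto simp: orbit_state_run intro!: exI[of _ period])

lemma orbit_state_run_eq:
  assumes "m \<ge> 1"
  shows "orb (run p m) = orb p"
proof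
  show "orb (run p m) \<subseteq> orb p"
    using assms by (auto simp: orbit_state_run run_add[symmetric])
  show "orb p \<subseteq> orb (run p m)"
  proof
    fix q assume "q \<in> orb p"
    then obtain x where x: "x \<ge> 1" "q = run p x"
      by (auto simp: orbit_state_run)
    have "m \<le> m * period"
      using period_pos by simp
    then have "m + (x + m * period - m) = x + m * period"
      by linarith
    then have "run (run p m) (x + m * period - m) = run p (x + m * period)"
      by (simp add: run_add[symmetric])
    also have "\<dots> = q"
      using x run_add_mult_period by simp
    moreover have "1 \<le> x + m * period - m"
      using x(1) \<open>m \<le> m * period\<close> by linarith
    ultimately show "q \<in> orb (run p m)"
      by (auto simp: orbit_state_run)
  qed
qed

text \<open>The state reached after the full copies of \<open>J\<close> determines their number, because the run
  from \<open>p\<close> is injective on one period.\<close>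

lemma delta_w_take_wpow_period_inj:
  assumes "m < period * length J" "m' < period * length J"
    and "\<delta> p (take m (wpow J period)) = \<delta> p (take m' (wpow J period))"
    and "m mod length J = m' mod length J"
  shows "m = m'"
proof -
  let ?k = "length J"
  have finish: "\<delta> (\<delta> p (take x (wpow J period))) (drop (x mod ?k) J) = run p (Suc (x div ?k))"
    if "x < period * ?k" for x
  proof -
    have "x div ?k < period"
      using that length_J_pos by (simp add: less_mult_imp_div_less)
    then have "take x (wpow J period) = wpow J (x div ?k) @ take (x mod ?k) J"
      using take_wpow[of "x div ?k" period "x mod ?k" J] length_J_pos by (simp add: mult.commute)
    then show ?thesis
      by (simp add: run_def delta_w_append[symmetric] wpow_Suc_right)
  qed
  have "run p (Suc (m div ?k)) = run p (Suc (m' div ?k))"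
    using finish[OF assms(1)] finish[OF assms(2)] assms(3,4) by simp
  moreover have "Suc (m div ?k) \<in> {1..period}" "Suc (m' div ?k) \<in> {1..period}"
    using assms(1,2) length_J_pos by (auto simp: less_mult_imp_div_less Suc_leI)
  ultimately have "m div ?k = m' div ?k"
    using run_inj_on_period by (auto dest: inj_onD)
  then show ?thesis
    using assms(4) by (metis div_mult_mod_eq)
qed

end

text \<open>For \<open>K = q w\<close> with \<open>|q| = l - 1\<close>, the state reached from \<open>q\<close> on input \<open>w J\<^sup>|\<^sup>Q\<^sup>|\<close>
  is periodic; its orbit labels the summand of \<open>P(J) \<circ> \<psi>\<^sub>\<sigma>\<close> containing \<open>s\<^sub>K \<Omega>\<close>.\<close>

definition word_class :: "nat list \<Rightarrow> nat list set" where
  "word_class K = orb (\<delta> (take (l - 1) K) (drop (l - 1) K @ wpow J (card Q)))"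

lemma word_class_split: "q \<in> Q \<Longrightarrow> word_class (q @ w) = orb (\<delta> q (w @ wpow J (card Q)))"
  by (simp add: word_class_def Q_length)

lemma word_class_eq_orbit:
  "word_class K = orb (run (\<delta> (take (l - 1) K) (drop (l - 1) K)) (card Q))"
  unfolding word_class_def run_def by (simp only: delta_w_append)

lemma word_class_state_periodic:
  assumes "set K \<subseteq> {1..N}" "length K \<ge> l - 1"
  shows "run (\<delta> (take (l - 1) K) (drop (l - 1) K)) (card Q) \<in> periodic_states N l \<sigma> J"
proof -
  have "set (drop (l - 1) K) \<subseteq> {1..N}"
    using assms(1) by (meson order_trans set_drop_subset)
  then show ?thesis
    using assms by (intro run_card_Q_periodic delta_w_in_Q take_in_Q)
qed

lemma word_class_append_J:
  assumes "set K \<subseteq> {1..N}" "length K \<ge> l - 1"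
  shows "word_class (K @ J) = word_class K"
proof -
  define x where "x = run (\<delta> (take (l - 1) K) (drop (l - 1) K)) (card Q)"
  have "word_class (K @ J) = orb (\<delta> (take (l - 1) K) (drop (l - 1) K @ J @ wpow J (card Q)))"
    using assms(2) by (simp add: word_class_def)
  also have "J @ wpow J (card Q) = wpow J (card Q) @ J"
    by (metis wpow_Suc wpow_Suc_right)
  then have "\<delta> (take (l - 1) K) (drop (l - 1) K @ J @ wpow J (card Q)) = run x 1"
    by (simp add: x_def run_def delta_w_append wpow_def One_nat_def)
  finally have "word_class (K @ J) = orb (run x 1)" .
  also have "\<dots> = orb x"
    using word_class_state_periodic[OF assms] by (simp add: orbit_state_run_eq x_def)
  also have "\<dots> = word_class K"
    by (simp add: word_class_eq_orbit x_def)
  finally show ?thesis .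
qed

lemma word_class_append_wpow:
  assumes "set K \<subseteq> {1..N}" "length K \<ge> l - 1"
  shows "word_class (K @ wpow J t) = word_class K"
proof (induction t)
  case (Suc t)
  have "word_class (K @ wpow J (Suc t)) = word_class ((K @ wpow J t) @ J)"
    by (simp add: wpow_Suc_right)
  also have "\<dots> = word_class (K @ wpow J t)"
    using assms wpow_letters by (intro word_class_append_J) auto
  finally show ?case
    using Suc by simp
qed simp

lemma word_class_periodic:
  assumes "p \<in> periodic_states N l \<sigma> J"
  shows "word_class p = orb p"
proof -
  have "card Q \<ge> 1"
    using replicate_in_Q finite_words[of N "l - 1"] by (metis card_0_eq empty_iff less_one not_le)
  moreover have "word_class p = orb (run p (card Q))"
    using word_class_split[OF periodic_in_Q[OF assms], of "[]"] by (simp add: run_def)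
  ultimately show ?thesis
    by (simp add: orbit_state_run_eq[OF assms])
qed

end

section \<open>The summands\<close>

lemma mono_op_append: "mono_op S Sa (u @ v) = mono_op S Sa u \<circ> mono_op S Sa v"
  by (induction u) auto

lemma opw_eq_mono_op: "opw S y = mono_op S Sa (map (Pair True) y)"
  by (induction y) auto

lemma opa_eq_mono_op: "opa Sa z = mono_op S Sa (map (Pair False) (rev z))"
  by (induction z) (auto simp: mono_op_append)

locale composed_P = cuntz_permutation N S Sa l \<sigma> + mealy_machine N l \<sigma> J
  for N S Sa l \<sigma> J +
  fixes \<Omega> assumes PJ: "PJ_vector S J \<Omega>"
begin

abbreviation "T \<equiv> comp_psi_S N l \<sigma> S Sa"
abbreviation "Ta \<equiv> comp_psi_Sa N l \<sigma> S Sa"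

sublocale T: cuntz_representation N T Ta
  by unfold_locales (rule cuntz_rep_comp_psi)

lemma T_eq: "T a = U \<circ> S a" and Ta_eq: "Ta a = Sa a \<circ> Ua"
  by (simp_all add: comp_psi_S_def comp_psi_Sa_def)

lemma \<Omega>_l2: "\<Omega> \<in> l2"
  using PJ by (simp add: PJ_vector_def)

lemma opw_J_\<Omega>: "opw S J \<Omega> = \<Omega>"
  using PJ by (simp add: PJ_vector_def)

lemma opw_wpow_\<Omega>: "opw S (wpow J n) \<Omega> = \<Omega>"
  by (induction n) (auto simp: wpow_Suc opw_append opw_J_\<Omega>)

lemma drop_J_letters: "set (drop b J) \<subseteq> {1..N}"
  using J_letters by (meson order_trans set_drop_subset)

lemma ip_shifts_\<Omega>:
  "b < length J \<Longrightarrow> b' < length J \<Longrightarrow>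
   ip (opw S (drop b J) \<Omega>) (opw S (drop b' J) \<Omega>) = (if b = b' then 1 else 0)"
  using PJ by (simp add: PJ_vector_def)

lemma opw_\<Omega>_l2: "set K \<subseteq> {1..N} \<Longrightarrow> opw S K \<Omega> \<in> l2"
  using opw_l2 \<Omega>_l2 by blast

lemma T_opw:
  assumes "q \<in> Q" "a \<in> {1..N}" "g \<in> l2"
  shows "T a (opw S q g) = opw S (\<sigma> (a # q)) g"
proof -
  have "a # q \<in> words N l"
    using assms l_pos by (auto simp: words_def)
  then show ?thesis
    using assms by (simp add: T_eq U_opw[symmetric])
qed

lemma T_mealy:
  assumes "q \<in> Q" "c \<in> {1..N}" "g \<in> l2"
  shows "T (mealy_lambda \<sigma> q c) (opw S (mealy_delta \<sigma> q c) g) = opw S q (S c g)"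
  using T_opw[OF mealy_delta_in_Q[OF assms(1,2)] mealy_lambda_letter[OF assms(1,2)] assms(3)]
  by (simp add: \<sigma>_mealy[OF assms(1,2)] opw_append)

lemma opw_T_lambda_w:
  "q \<in> Q \<Longrightarrow> set w \<subseteq> {1..N} \<Longrightarrow> g \<in> l2 \<Longrightarrow>
   opw T (lambda_w \<sigma> q w) (opw S (\<delta> q w) g) = opw S q (opw S w g)"
proof (induction w arbitrary: q)
  case (Cons c w)
  then have "opw T (lambda_w \<sigma> q (c # w)) (opw S (\<delta> q (c # w)) g)
      = T (mealy_lambda \<sigma> q c) (opw S (mealy_delta \<sigma> q c) (opw S w g))"
    by (simp add: mealy_delta_in_Q)
  also have "\<dots> = opw S q (S c (opw S w g))"
    using Cons.prems by (intro T_mealy opw_l2) auto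
  finally show ?case
    by simp
qed simp

lemma Ta_opw_snoc:
  assumes "q \<in> Q" "c \<in> {1..N}" "a \<in> {1..N}" "g \<in> l2"
  shows "Ta a (opw S (q @ [c]) g)
    = (if a = mealy_lambda \<sigma> q c then opw S (mealy_delta \<sigma> q c) g else (\<lambda>x. 0))"
proof -
  have "q @ [c] \<in> words N l"
    using assms l_pos by (auto simp: words_def)
  then have "Ta a (opw S (q @ [c]) g) = Sa a (S (mealy_lambda \<sigma> q c) (opw S (mealy_delta \<sigma> q c) g))"
    using assms by (simp add: Ta_eq Ua_opw mealy_lambda_Cons_delta[symmetric])
  also have "\<dots> = (if a = mealy_lambda \<sigma> q c then opw S (mealy_delta \<sigma> q c) g else (\<lambda>x. 0))"
    using assms by (intro Sa_S mealy_lambda_letter opw_l2 Q_letters mealy_delta_in_Q)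
  finally show ?thesis .
qed

lemma opw_T_drop_lambda_w_period:
  assumes p: "p \<in> periodic_states N l \<sigma> J" and m: "m < period p * length J"
  shows "opw T (drop m (lambda_w \<sigma> p (wpow J (period p)))) (opw S p \<Omega>)
    = opw S (\<delta> p (take m (wpow J (period p)))) (opw S (drop (m mod length J) J) \<Omega>)"
proof -
  let ?W = "wpow J (period p)" and ?k = "length J"
  define q where "q = \<delta> p (take m ?W)"
  have "m div ?k < period p" "m mod ?k < ?k"
    using m length_J_pos by (auto simp: less_mult_imp_div_less)
  then have drop_W: "drop m ?W = drop (m mod ?k) J @ wpow J (period p - Suc (m div ?k))"
    using drop_wpow[of "m div ?k" "period p" "m mod ?k" J] by (simp add: mult.commute)
  have q: "q \<in> Q"
    unfolding q_def using periodic_in_Q[OF p] wpow_letters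
    by (intro delta_w_in_Q) (auto dest: in_set_takeD)
  have "\<delta> q (drop m ?W) = p"
    using run_period[OF p] unfolding q_def run_def by (metis append_take_drop_id delta_w_append)
  then have "opw T (drop m (lambda_w \<sigma> p ?W)) (opw S p \<Omega>) = opw T (lambda_w \<sigma> q (drop m ?W)) (opw S (\<delta> q (drop m ?W)) \<Omega>)"
    by (simp add: drop_lambda_w q_def)
  also have "\<dots> = opw S q (opw S (drop m ?W) \<Omega>)"
    using q wpow_letters by (intro opw_T_lambda_w \<Omega>_l2) (auto dest: in_set_dropD)
  also have "\<dots> = opw S q (opw S (drop (m mod ?k) J) \<Omega>)"
    by (simp add: drop_W opw_append opw_wpow_\<Omega>)
  finally show ?thesis
    by (simp add: q_def)
qed

lemma PJ_vector_T:
  assumes p: "p \<in> periodic_states N l \<sigma> J"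
  shows "PJ_vector T (lambda_w \<sigma> p (wpow J (card (orb p)))) (opw S p \<Omega>)"
proof -
  let ?W = "wpow J (period p)" and ?k = "length J"
  have p_Q: "p \<in> Q"
    using periodic_in_Q[OF p] .
  have fixed: "opw T (lambda_w \<sigma> p ?W) (opw S p \<Omega>) = opw S p \<Omega>"
    using opw_T_lambda_w[OF p_Q wpow_letters[of "period p"] \<Omega>_l2] run_period[OF p]
    by (simp add: run_def opw_wpow_\<Omega>)
  have state_Q: "\<delta> p (take m ?W) \<in> Q" for m
    using p_Q wpow_letters by (intro delta_w_in_Q) (auto dest: in_set_takeD)
  have orthonormal:
    "ip (opw T (drop m (lambda_w \<sigma> p ?W)) (opw S p \<Omega>)) (opw T (drop m' (lambda_w \<sigma> p ?W)) (opw S p \<Omega>))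
      = (if m = m' then 1 else 0)"
    if "m < period p * ?k" "m' < period p * ?k" for m m'
  proof -
    have "ip (opw S (\<delta> p (take m ?W)) (opw S (drop (m mod ?k) J) \<Omega>))
        (opw S (\<delta> p (take m' ?W)) (opw S (drop (m' mod ?k) J) \<Omega>))
      = (if \<delta> p (take m ?W) = \<delta> p (take m' ?W)
         then ip (opw S (drop (m mod ?k) J) \<Omega>) (opw S (drop (m' mod ?k) J) \<Omega>) else 0)"
      using state_Q by (intro ip_opw_opw Q_letters opw_\<Omega>_l2 drop_J_letters) (simp_all add: Q_length)
    also have "\<dots> = (if m = m' then 1 else 0)"
      using delta_w_take_wpow_period_inj[OF p that] ip_shifts_\<Omega>[of "m mod ?k" "m' mod ?k"]
        length_J_pos by auto
    finally show ?thesis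
      using opw_T_drop_lambda_w_period[OF p] that by simp
  qed
  show ?thesis
    unfolding PJ_vector_def card_orbit_state[OF p]
    using opw_\<Omega>_l2[OF Q_letters[OF p_Q]] l2norm_opw[OF Q_letters[OF p_Q] \<Omega>_l2] PJ fixed orthonormal
    by (simp add: PJ_vector_def)
qed

section \<open>Invariant classes of vectors\<close>

definition class_vectors :: "nat list set \<Rightarrow> ('a \<Rightarrow> complex) set" where
  "class_vectors Orb = {opw S K \<Omega> | K. set K \<subseteq> {1..N} \<and> length K \<ge> l - 1 \<and> word_class K = Orb}"

lemma class_vectors_l2: "f \<in> class_vectors Orb \<Longrightarrow> f \<in> l2"
  unfolding class_vectors_def using opw_\<Omega>_l2 by blast

lemma periodic_in_class_vectors:
  "p \<in> periodic_states N l \<sigma> J \<Longrightarrow> opw S p \<Omega> \<in> class_vectors (orb p)"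
  unfolding class_vectors_def
  using periodic_in_Q Q_letters Q_length word_class_periodic by fastforce

lemma T_class_vectors:
  assumes "f \<in> class_vectors Orb" "a \<in> {1..N}"
  shows "T a f \<in> class_vectors Orb"
proof -
  obtain K where K: "f = opw S K \<Omega>" "set K \<subseteq> {1..N}" "length K \<ge> l - 1" "word_class K = Orb"
    using assms by (auto simp: class_vectors_def)
  define q w where "q = take (l - 1) K" and "w = drop (l - 1) K"
  have q: "q \<in> Q" and w: "set w \<subseteq> {1..N}" and K_qw: "K = q @ w"
    using K take_in_Q drop_J_letters by (auto simp: q_def w_def dest: in_set_dropD)
  have "\<sigma> (a # q) \<in> words N l"
    using q assms(2) l_pos by (intro \<sigma>_words) (auto simp: words_def)
  then obtain q' c where qc: "\<sigma> (a # q) = q' @ [c]" and q': "q' \<in> Q" and c: "c \<in> {1..N}"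
    using l_pos by (cases "\<sigma> (a # q)" rule: rev_cases) (auto simp: words_def)
  have "mealy_delta \<sigma> q' c = q"
    unfolding mealy_delta_def using qc[symmetric] inv_\<sigma> by simp
  then have "word_class (q' @ c # w) = word_class K"
    using q q' by (simp add: word_class_split K_qw)
  moreover have "T a f = opw S (q' @ c # w) \<Omega>"
    using K(1) K_qw T_opw[OF q assms(2) opw_\<Omega>_l2[OF w]] qc by (simp add: opw_append)
  moreover have "set (q' @ c # w) \<subseteq> {1..N}" "length (q' @ c # w) \<ge> l - 1"
    using q' c w by (auto simp: words_def)
  ultimately show ?thesis
    unfolding class_vectors_def using K(4) by blast
qed

lemma Ta_class_vectors:
  assumes "f \<in> class_vectors Orb" "a \<in> {1..N}"
  shows "Ta a f \<in> class_vectors Orb \<or> Ta a f = (\<lambda>x. 0)"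
proof -
  obtain K0 where K0: "f = opw S K0 \<Omega>" "set K0 \<subseteq> {1..N}" "length K0 \<ge> l - 1" "word_class K0 = Orb"
    using assms by (auto simp: class_vectors_def)
  define q w where "q = take (l - 1) (K0 @ J)" and "w = drop (l - 1) (K0 @ J)"
  have q: "q \<in> Q"
    unfolding q_def using K0 J_letters by (intro take_in_Q) auto
  have "w \<noteq> []"
    using K0(3) length_J_pos by (simp add: w_def)
  then obtain c w' where w: "w = c # w'"
    by (cases w) auto
  have "set w \<subseteq> set (K0 @ J)"
    unfolding w_def by (rule set_drop_subset)
  then have c: "c \<in> {1..N}" and w': "set w' \<subseteq> {1..N}"
    using K0(2) J_letters w by auto
  have K0J: "K0 @ J = q @ c # w'"
    using w append_take_drop_id[of "l - 1" "K0 @ J"] by (simp only: q_def w_def)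
  have "f = opw S (K0 @ J) \<Omega>"
    using K0(1) opw_J_\<Omega> by (simp add: opw_append)
  then have "f = opw S (q @ [c]) (opw S w' \<Omega>)"
    by (simp add: K0J opw_append)
  then have Taf: "Ta a f
      = (if a = mealy_lambda \<sigma> q c then opw S (mealy_delta \<sigma> q c @ w') \<Omega> else (\<lambda>x. 0))"
    using Ta_opw_snoc[OF q c assms(2) opw_\<Omega>_l2[OF w']] by (simp add: opw_append)
  have "word_class (mealy_delta \<sigma> q c @ w') = word_class (K0 @ J)"
    using q c mealy_delta_in_Q[OF q c] by (simp add: word_class_split K0J)
  also have "\<dots> = Orb"
    using word_class_append_J[OF K0(2,3)] K0(4) by simp
  finally have "opw S (mealy_delta \<sigma> q c @ w') \<Omega> \<in> class_vectors Orb"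
    using mealy_delta_in_Q[OF q c] w' unfolding class_vectors_def by (force simp: words_def)
  then show ?thesis
    using Taf by auto
qed

lemma mono_op_T_class_vectors:
  "set (map snd z) \<subseteq> {1..N} \<Longrightarrow> f \<in> class_vectors Orb \<Longrightarrow>
   mono_op T Ta z f \<in> class_vectors Orb \<or> mono_op T Ta z f = (\<lambda>x. 0)"
proof (induction z)
  case (Cons bi z)
  obtain b i where bi: "bi = (b, i)"
    by (cases bi)
  have i: "i \<in> {1..N}"
    using Cons.prems bi by auto
  have "T i (\<lambda>x. 0) = (\<lambda>x. 0)" "Ta i (\<lambda>x. 0) = (\<lambda>x. 0)"
    using l2_linear_zero[OF T.S_linear[OF i]] l2_linear_zero[OF T.Sa_linear[OF i]] .
  then show ?case
    using Cons T_class_vectors[OF _ i] Ta_class_vectors[OF _ i] bi by auto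
qed simp

text \<open>Since \<open>\<Omega>\<close> is fixed by \<open>s\<^sub>J\<close>, the vector \<open>s\<^sub>R \<Omega>\<close> can only overlap \<open>\<Omega>\<close> if \<open>R\<close> is a
  prefix of a power of \<open>J\<close>, and orthonormality of the shifts of \<open>\<Omega>\<close> excludes a proper
  prefix of \<open>J\<close> at the end.\<close>

lemma ip_\<Omega>_opw_nonzero:
  assumes "set R \<subseteq> {1..N}" "ip \<Omega> (opw S R \<Omega>) \<noteq> 0"
  shows "\<exists>t. R = wpow J t"
proof -
  let ?k = "length J"
  define t b where "t = length R div ?k" and "b = length R mod ?k"
  have b: "b < ?k" and len_R: "length R = t * ?k + b"
    using length_J_pos by (simp_all add: t_def b_def)
  let ?W = "wpow J (Suc t)"
  have "length R \<le> length ?W"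
    using len_R b by simp
  then have "opa Sa R (opw S ?W \<Omega>)
      = (if R = take (length R) ?W then opw S (drop (length R) ?W) \<Omega> else (\<lambda>x. 0))"
    using assms(1) wpow_letters \<Omega>_l2 by (intro opa_opw_prefix)
  also have "take (length R) ?W = wpow J t @ take b J"
    using take_wpow[of t "Suc t" b J] b len_R by (simp add: mult.commute)
  also have "drop (length R) ?W = drop b J"
    using drop_wpow[of t "Suc t" b J] b len_R by (simp add: mult.commute)
  finally have "ip \<Omega> (opw S R \<Omega>)
      = cnj (if R = wpow J t @ take b J then ip \<Omega> (opw S (drop b J) \<Omega>) else 0)"
    using assms(1) ip_opw_left[OF assms(1) \<Omega>_l2 opw_\<Omega>_l2[OF wpow_letters]] ip_swap[of \<Omega>]
    by (simp add: opw_wpow_\<Omega>)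
  then have R: "R = wpow J t @ take b J" and "ip \<Omega> (opw S (drop b J) \<Omega>) \<noteq> 0"
    using assms(2) by (auto split: if_splits)
  then have "b = 0"
    using ip_shifts_\<Omega>[OF length_J_pos b] by (auto simp: opw_J_\<Omega> split: if_splits)
  then show ?thesis
    using R by auto
qed

lemma word_class_eq_if_ip_nonzero:
  assumes K: "set K \<subseteq> {1..N}" "length K \<ge> l - 1" and K': "set K' \<subseteq> {1..N}"
    and "length K \<le> length K'" "ip (opw S K \<Omega>) (opw S K' \<Omega>) \<noteq> 0"
  shows "word_class K = word_class K'"
proof -
  have "ip (opw S K \<Omega>) (opw S K' \<Omega>)
      = (if K = take (length K) K' then ip \<Omega> (opw S (drop (length K) K') \<Omega>) else 0)"
    using assms \<Omega>_l2 by (simp add: ip_opw_left opw_l2 opa_opw_prefix)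
  then have prefix: "K = take (length K) K'" and "ip \<Omega> (opw S (drop (length K) K') \<Omega>) \<noteq> 0"
    using assms(5) by (auto split: if_splits)
  from prefix have K'_eq: "K' = K @ drop (length K) K'"
    by (metis append_take_drop_id)
  obtain t where "drop (length K) K' = wpow J t"
    using ip_\<Omega>_opw_nonzero K' \<open>ip \<Omega> (opw S (drop (length K) K') \<Omega>) \<noteq> 0\<close>
    by (meson order_trans set_drop_subset)
  then show ?thesis
    using K'_eq word_class_append_wpow[OF K] by simp
qed

lemma class_vectors_orthogonal:
  assumes "f \<in> class_vectors Orb" "g \<in> class_vectors Orb'" "Orb \<noteq> Orb'"
  shows "ip f g = 0"
proof (rule ccontr)
  assume nonzero: "ip f g \<noteq> 0"
  obtain K where K: "f = opw S K \<Omega>" "set K \<subseteq> {1..N}" "length K \<ge> l - 1" "word_class K = Orb"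
    using assms by (auto simp: class_vectors_def)
  obtain K' where K': "g = opw S K' \<Omega>" "set K' \<subseteq> {1..N}" "length K' \<ge> l - 1" "word_class K' = Orb'"
    using assms by (auto simp: class_vectors_def)
  have "ip g f \<noteq> 0"
    using nonzero ip_swap[of g f] by auto
  then have "word_class K = word_class K'"
    using nonzero K K' word_class_eq_if_ip_nonzero
    by (cases "length K \<le> length K'") (auto intro: sym)
  then show False
    using assms(3) K(4) K'(4) by simp
qed

end

section \<open>Orthogonality and completeness\<close>

context composed_P
begin

lemma opw_\<Omega>_Cons:
  assumes "set K \<subseteq> {1..N}"
  obtains c K' where "opw S K \<Omega> = S c (opw S K' \<Omega>)" "c \<in> {1..N}" "set K' \<subseteq> {1..N}"
proof (cases K)
  case Nil
  then show ?thesis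
    using that[of "hd J" "tl J"] opw_J_\<Omega> J_letters length_J_pos by (cases J) auto
next
  case (Cons c K')
  then show ?thesis
    using that[of c K'] assms by simp
qed

lemma Sa_opw_\<Omega>:
  assumes "i \<in> {1..N}" "set K \<subseteq> {1..N}"
  shows "Sa i (opw S K \<Omega>) = (\<lambda>x. 0) \<or> (\<exists>K'. set K' \<subseteq> {1..N} \<and> Sa i (opw S K \<Omega>) = opw S K' \<Omega>)"
proof -
  obtain c K' where cK': "opw S K \<Omega> = S c (opw S K' \<Omega>)" "c \<in> {1..N}" "set K' \<subseteq> {1..N}"
    using opw_\<Omega>_Cons[OF assms(2)] .
  then have "Sa i (opw S K \<Omega>) = (if i = c then opw S K' \<Omega> else (\<lambda>x. 0))"
    using assms(1) by (simp add: Sa_S opw_\<Omega>_l2)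
  then show ?thesis
    using cK'(3) by auto
qed

lemma mono_op_\<Omega>_cases:
  "set (map snd z) \<subseteq> {1..N} \<Longrightarrow>
   mono_op S Sa z \<Omega> = (\<lambda>x. 0) \<or> (\<exists>K. set K \<subseteq> {1..N} \<and> mono_op S Sa z \<Omega> = opw S K \<Omega>)"
proof (induction z)
  case Nil
  then show ?case
    by (intro disjI2 exI[of _ "[]"]) simp
next
  case (Cons bi z)
  obtain b i where bi: "bi = (b, i)"
    by (cases bi)
  have i: "i \<in> {1..N}" and z: "set (map snd z) \<subseteq> {1..N}"
    using Cons.prems bi by auto
  have step: "mono_op S Sa (bi # z) \<Omega> = (if b then S i else Sa i) (mono_op S Sa z \<Omega>)"
    using bi by simp
  from Cons.IH[OF z] show ?case
  proof
    assume "mono_op S Sa z \<Omega> = (\<lambda>x. 0)"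
    then show ?thesis
      using step l2_linear_zero[OF S_linear[OF i]] l2_linear_zero[OF Sa_linear[OF i]] by simp
  next
    assume "\<exists>K. set K \<subseteq> {1..N} \<and> mono_op S Sa z \<Omega> = opw S K \<Omega>"
    then obtain K where K: "set K \<subseteq> {1..N}" "mono_op S Sa z \<Omega> = opw S K \<Omega>"
      by blast
    show ?thesis
    proof (cases b)
      case True
      then show ?thesis
        using step K i by (intro disjI2 exI[of _ "i # K"]) simp
    next
      case False
      then show ?thesis
        using step K Sa_opw_\<Omega>[OF i K(1)] by simp
    qed
  qed
qed

lemma opw_run_\<Omega>:
  assumes "q \<in> Q"
  shows "opw S (run q n) \<Omega> = opa Ta (lambda_w \<sigma> q (wpow J n)) (opw S q \<Omega>)"
proof -
  have "opw T (lambda_w \<sigma> q (wpow J n)) (opw S (run q n) \<Omega>) = opw S q \<Omega>"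
    using opw_T_lambda_w[OF assms wpow_letters \<Omega>_l2, of n] by (simp add: run_def opw_wpow_\<Omega>)
  then show ?thesis
    using T.opa_opw_cancel[OF lambda_w_letters[OF assms wpow_letters[of n]]
        opw_\<Omega>_l2[OF Q_letters[OF run_in_Q[OF assms, of n]]]]
    by simp
qed

text \<open>Padding \<open>K\<close> with copies of \<open>J\<close> does not change \<open>s\<^sub>K \<Omega>\<close> but makes the state reached periodic.\<close>

lemma opw_\<Omega>_via_periodic_state:
  assumes K: "set K \<subseteq> {1..N}"
  obtains q w where "q \<in> Q" "set w \<subseteq> {1..N}" "\<delta> q w \<in> periodic_states N l \<sigma> J"
    "opw S K \<Omega> = opw T (lambda_w \<sigma> q w) (opw S (\<delta> q w) \<Omega>)"
proof -
  define K' where "K' = K @ wpow J l"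
  have K'_letters: "set K' \<subseteq> {1..N}"
    using K wpow_letters by (auto simp: K'_def)
  have "l \<le> l * length J" "length K' = length K + l * length J"
    using mult_le_mono2[OF J_nonempty, of l] by (simp_all add: K'_def)
  then have "length K' \<ge> l - 1"
    by linarith
  define q w0 where "q = take (l - 1) K'" and "w0 = drop (l - 1) K'"
  define w where "w = w0 @ wpow J (card Q)"
  have q: "q \<in> Q"
    unfolding q_def using K'_letters \<open>length K' \<ge> l - 1\<close> by (rule take_in_Q)
  have w0: "set w0 \<subseteq> {1..N}"
    unfolding w0_def using K'_letters by (meson order_trans set_drop_subset)
  then have w: "set w \<subseteq> {1..N}"
    using wpow_letters by (auto simp: w_def)
  have "opw S K \<Omega> = opw S K' \<Omega>"
    by (simp add: K'_def opw_append opw_wpow_\<Omega>)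
  also have "K' = q @ w0"
    unfolding q_def w0_def by (rule append_take_drop_id[symmetric])
  also have "opw S (q @ w0) \<Omega> = opw S q (opw S w \<Omega>)"
    by (simp add: w_def opw_append opw_wpow_\<Omega>)
  also have "\<dots> = opw T (lambda_w \<sigma> q w) (opw S (\<delta> q w) \<Omega>)"
    using opw_T_lambda_w[OF q w \<Omega>_l2] by simp
  finally show ?thesis
    using that[OF q w] run_card_Q_periodic[OF delta_w_in_Q[OF q w0]]
    by (simp add: w_def delta_w_append run_def)
qed

end

locale decomposition = composed_P +
  fixes M :: nat and p :: "nat \<Rightarrow> nat list"
  assumes p_periodic: "\<forall>i<M. p i \<in> periodic_states N l \<sigma> J"
    and orbits_disjoint: "\<forall>i<M. \<forall>i'<M. i \<noteq> i' \<longrightarrow> orb (p i) \<inter> orb (p i') = {}"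
    and orbits_cover: "(\<Union>i<M. orb (p i)) = periodic_states N l \<sigma> J"
begin

lemma opw_\<Omega>_T_generated:
  assumes "set K \<subseteq> {1..N}"
  shows "\<exists>i<M. \<exists>z. set (map snd z) \<subseteq> {1..N} \<and> opw S K \<Omega> = mono_op T Ta z (opw S (p i) \<Omega>)"
proof -
  obtain q w where q: "q \<in> Q" and w: "set w \<subseteq> {1..N}" and "\<delta> q w \<in> periodic_states N l \<sigma> J"
    and K: "opw S K \<Omega> = opw T (lambda_w \<sigma> q w) (opw S (\<delta> q w) \<Omega>)"
    using opw_\<Omega>_via_periodic_state[OF assms] .
  then have "\<delta> q w \<in> (\<Union>i<M. orb (p i))"
    using orbits_cover by simp
  then obtain i n where i: "i < M" and n: "\<delta> q w = run (p i) n"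
    by (auto simp: orbit_state_run)
  have p_i: "p i \<in> Q"
    using p_periodic i periodic_in_Q by blast
  define y z where "y = lambda_w \<sigma> q w" and "z = lambda_w \<sigma> (p i) (wpow J n)"
  have "opw S K \<Omega> = opw T y (opa Ta z (opw S (p i) \<Omega>))"
    using K opw_run_\<Omega>[OF p_i] by (simp add: n y_def z_def)
  also have "\<dots> = mono_op T Ta (map (Pair True) y @ map (Pair False) (rev z)) (opw S (p i) \<Omega>)"
    by (simp add: mono_op_append opw_eq_mono_op[of T _ Ta] opa_eq_mono_op[of Ta _ T])
  finally show ?thesis
    using i lambda_w_letters[OF q w] lambda_w_letters[OF p_i wpow_letters]
    by (intro exI[of _ i] conjI exI) (auto simp: y_def z_def)
qed

lemma T_generators_in_class:
  assumes "i < M" "set (map snd z) \<subseteq> {1..N}"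
  shows "mono_op T Ta z (opw S (p i) \<Omega>) \<in> class_vectors (orb (p i)) \<union> {\<lambda>x. 0}"
  using mono_op_T_class_vectors[OF assms(2) periodic_in_class_vectors] p_periodic assms(1) by auto

lemma T_generators_l2:
  assumes "i < M"
  shows "{mono_op T Ta z (opw S (p i) \<Omega>) | z. set (map snd z) \<subseteq> {1..N}} \<subseteq> l2"
proof
  fix x assume "x \<in> {mono_op T Ta z (opw S (p i) \<Omega>) | z. set (map snd z) \<subseteq> {1..N}}"
  then obtain z where z: "set (map snd z) \<subseteq> {1..N}" and x: "x = mono_op T Ta z (opw S (p i) \<Omega>)"
    by blast
  have "x \<in> class_vectors (orb (p i)) \<union> {\<lambda>x. 0}"
    unfolding x by (rule T_generators_in_class[OF assms z])
  then show "x \<in> l2"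
    using class_vectors_l2 l2_zero by auto
qed

lemma T_cyclic_orthogonal:
  assumes "i < M" "i' < M" "i \<noteq> i'"
    and "f \<in> cyclic_space N T Ta (opw S (p i) \<Omega>)" "g \<in> cyclic_space N T Ta (opw S (p i') \<Omega>)"
  shows "ip f g = 0"
proof -
  let ?G = "\<lambda>i. {mono_op T Ta z (opw S (p i) \<Omega>) | z. set (map snd z) \<subseteq> {1..N}}"
  have G: "?G j \<subseteq> class_vectors (orb (p j)) \<union> {\<lambda>x. 0}" if "j < M" for j
    using T_generators_in_class[OF that] by blast
  have "orb (p i) \<noteq> orb (p i')"
    using orbits_disjoint assms(1-3) mem_orbit_state_self p_periodic by blast
  then have "ip x y = 0" if "x \<in> ?G i" "y \<in> ?G i'" for x y
  proof -
    have "x \<in> class_vectors (orb (p i)) \<union> {\<lambda>x. 0}" "y \<in> class_vectors (orb (p i')) \<union> {\<lambda>x. 0}"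
      using G[OF assms(1)] G[OF assms(2)] that by blast+
    then show ?thesis
      using class_vectors_orthogonal[of x "orb (p i)" y "orb (p i')"] \<open>orb (p i) \<noteq> orb (p i')\<close>
      by auto
  qed
  then show ?thesis
    using T_generators_l2[OF assms(1)] T_generators_l2[OF assms(2)] assms(4,5)
    by (intro ip_cl_span_orthogonal[of "?G i" "?G i'"]) (auto simp: cyclic_space_def)
qed

lemma cl_span_T_cyclic:
  assumes cyclic: "cyclic_space N S Sa \<Omega> = l2"
  shows "cl_span (\<Union>i<M. cyclic_space N T Ta (opw S (p i) \<Omega>)) = l2"
proof
  show "cl_span (\<Union>i<M. cyclic_space N T Ta (opw S (p i) \<Omega>)) \<subseteq> l2"
    by (auto simp: cl_span_def)
  have M: "M > 0"
    using orbits_cover periodic_states_nonempty by (cases M) auto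
  have "mono_op S Sa z \<Omega> \<in> (\<Union>i<M. cyclic_space N T Ta (opw S (p i) \<Omega>))"
    if z: "set (map snd z) \<subseteq> {1..N}" for z
    using mono_op_\<Omega>_cases[OF z]
  proof
    assume "mono_op S Sa z \<Omega> = (\<lambda>x. 0)"
    then show ?thesis
      using M zero_in_cl_span by (auto simp: cyclic_space_def)
  next
    assume "\<exists>K. set K \<subseteq> {1..N} \<and> mono_op S Sa z \<Omega> = opw S K \<Omega>"
    then obtain K i z' where "i < M" "set (map snd z') \<subseteq> {1..N}"
      and "mono_op S Sa z \<Omega> = mono_op T Ta z' (opw S (p i) \<Omega>)"
      using opw_\<Omega>_T_generated by metis
    moreover have "mono_op T Ta z' (opw S (p i) \<Omega>) \<in> cyclic_space N T Ta (opw S (p i) \<Omega>)"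
      unfolding cyclic_space_def using calculation(2) T_generators_l2[OF calculation(1)]
      by (intro mem_cl_span) blast+
    ultimately show ?thesis
      by auto
  qed
  then have "cyclic_space N S Sa \<Omega> \<subseteq> cl_span (\<Union>i<M. cyclic_space N T Ta (opw S (p i) \<Omega>))"
    unfolding cyclic_space_def by (intro cl_span_mono) blast
  then show "l2 \<subseteq> cl_span (\<Union>i<M. cyclic_space N T Ta (opw S (p i) \<Omega>))"
    using cyclic by simp
qed

end

theorem theorem1p3:
  fixes N l :: nat and \<sigma> :: "nat list \<Rightarrow> nat list" and J :: "nat list"
    and M :: nat and p :: "nat \<Rightarrow> nat list"
    and S Sa :: "nat \<Rightarrow> ('a \<Rightarrow> complex) \<Rightarrow> ('a \<Rightarrow> complex)"
  assumes "N \<ge> 2" and "l \<ge> 1"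
    and "\<sigma> permutes words N l"
    and "length J \<ge> 1" and "set J \<subseteq> {1..N}" and "nonperiodic J"
    and "\<forall>i<M. p i \<in> periodic_states N l \<sigma> J"
    and "\<forall>i<M. \<forall>i'<M. i \<noteq> i' \<longrightarrow> orbit_state \<sigma> J (p i) \<inter> orbit_state \<sigma> J (p i') = {}"
    and "(\<Union>i<M. orbit_state \<sigma> J (p i)) = periodic_states N l \<sigma> J"
    and "is_P N S Sa J"
  shows "is_sum_P N (comp_psi_S N l \<sigma> S Sa) (comp_psi_Sa N l \<sigma> S Sa) M
           (\<lambda>i. lambda_w \<sigma> (p i) (wpow J (card (orbit_state \<sigma> J (p i)))))"
proof -
  (* N \<ge> 2 and the nonperiodicity of J are what make P(J) exist; here its existence is
     the hypothesis is_P N S Sa J. *)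
  obtain \<Omega> where rep: "cuntz_rep N S Sa" and PJ: "PJ_vector S J \<Omega>"
    and cyclic: "cyclic_space N S Sa \<Omega> = l2"
    using assms(10) by (auto simp: is_P_def)
  interpret decomposition N S Sa l \<sigma> J \<Omega> M p
    using rep PJ assms(2-5,7-9) by unfold_locales simp_all
  show ?thesis
    unfolding is_sum_P_def
  proof (intro conjI exI[of _ "\<lambda>i. opw S (p i) \<Omega>"])
    show "cuntz_rep N T Ta"
      by (rule cuntz_rep_comp_psi)
    show "\<forall>i<M. PJ_vector T (lambda_w \<sigma> (p i) (wpow J (card (orb (p i))))) (opw S (p i) \<Omega>)"
      using PJ_vector_T p_periodic by simp
    show "\<forall>i<M. \<forall>i'<M. i \<noteq> i' \<longrightarrow> (\<forall>f\<in>cyclic_space N T Ta (opw S (p i) \<Omega>).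
        \<forall>g\<in>cyclic_space N T Ta (opw S (p i') \<Omega>). ip f g = 0)"
      using T_cyclic_orthogonal by blast
    show "cl_span (\<Union>i<M. cyclic_space N T Ta (opw S (p i) \<Omega>)) = l2"
      by (rule cl_span_T_cyclic[OF cyclic])
  qed
qed

end
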